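(* Let $L=\{0,u,v,u+v\}\subseteq\mathbb F_2^n$ be a two-dimensional linear subspace whose three nonzero elements all have the same Hamming weight $k$. Let $|D_L\rangle=3^{-1/2}\sum_{x\in L\setminus\{0\}}|x\rangle$, $|\psi_L\rangle=\alpha|0^n\rangle+\beta|D_L\rangle$ with $\alpha,\beta>0$, $\alpha^2+\beta^2=1$, $r=\alpha/\beta$, and $\rho_L(\gamma)=\mathcal E_\gamma^{\otimes n}(|\psi_L\rangle\langle\psi_L|)$, $q=1-\gamma$. Then $$\rho_L(\gamma)=p_{\mathbf0}|0^n\rangle\langle0^n|+p_L|D_L\rangle\langle D_L|+c_L\bigl(|0^n\rangle\langle D_L|+|D_L\rangle\langle0^n|\bigr)+\Omega_L(\gamma),$$ with $p_{\mathbf0}=\alpha^2+\beta^2\gamma^k$, $p_L=\beta^2q^k$, $c_L=\alpha\beta q^{k/2}$, and $\Omega_L(\gamma)$ a nonnegative combination of density matrices of pure stabilizer states, supported on computational-basis states of Hamming weights $1,\dots,k-1$. Moreover $\rho_L(\gamma)\in\mathcal S$ if and only if $p_{\mathbf0}\ge p_L/3$ and $c_L\le p_L/\sqrt3$. Consequently, if $0<r<1/\sqrt3$, then for $\gamma\in[0,1]$: $\rho_L(\gamma)\in\mathcal S$ iff $\gamma\in[\gamma_-,\gamma_+]$ or $\gamma=1$, where $\gamma_+=1-(\sqrt3\,r)^{2/k}$ and $\gamma_-$ is the unique root in $(0,\gamma_+)$ of $r^2+\gamma^k=(1-\gamma)^k/3$. For $n=3$, $k=2$ this gives $\gamma_-=(\sqrt{3-6r^2}-1)/2$,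 $\gamma_+=1-\sqrt3\,r$.
   Context: $\mathcal E_\gamma$ is single-qubit amplitude damping with Kraus operators $|0\rangle\langle0|+\sqrt{1-\gamma}|1\rangle\langle1|$ and $\sqrt\gamma|0\rangle\langle1|$. $\mathcal S$ is the $n$-qubit stabilizer polytope (convex hull of the density matrices of pure stabilizer states $C|0^n\rangle$, $C$ an $n$-qubit Clifford unitary). Bit strings in $\{0,1\}^n$ are identified with $\mathbb F_2^n$. *)

theory Defs
  imports Complex_Main
begin

text \<open>An n-qubit operator is a function nat => nat => complex whose
  entries at row/column indices in {..<2^n} are the relevant ones; an n-qubit
  (ket) vector is a function nat => complex on {..<2^n}. A computational basis
  index x < 2^n is identified with the bit string (bit x 0, ..., bit x (n-1))
  in F_2^n; addition in F_2^n is xor.\<close>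

definition mat_eq :: "nat \<Rightarrow> (nat \<Rightarrow> nat \<Rightarrow> complex) \<Rightarrow> (nat \<Rightarrow> nat \<Rightarrow> complex) \<Rightarrow> bool" where
  "mat_eq N A B \<longleftrightarrow> (\<forall>i<N. \<forall>j<N. A i j = B i j)"

definition mmul :: "nat \<Rightarrow> (nat \<Rightarrow> nat \<Rightarrow> complex) \<Rightarrow> (nat \<Rightarrow> nat \<Rightarrow> complex) \<Rightarrow> (nat \<Rightarrow> nat \<Rightarrow> complex)" where
  "mmul N A B = (\<lambda>i j. \<Sum>l<N. A i l * B l j)"

definition adj :: "(nat \<Rightarrow> nat \<Rightarrow> complex) \<Rightarrow> (nat \<Rightarrow> nat \<Rightarrow> complex)" where
  "adj A = (\<lambda>i j. cnj (A j i))"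

definition idm :: "nat \<Rightarrow> nat \<Rightarrow> complex" where
  "idm = (\<lambda>i j. if i = j then 1 else 0)"

definition proj :: "(nat \<Rightarrow> complex) \<Rightarrow> (nat \<Rightarrow> nat \<Rightarrow> complex)" where
  "proj \<psi> = (\<lambda>x y. \<psi> x * cnj (\<psi> y))"

definition ket :: "nat \<Rightarrow> nat \<Rightarrow> complex" where
  "ket z = (\<lambda>x. if x = z then 1 else 0)"

definition hw :: "nat \<Rightarrow> nat \<Rightarrow> nat" where
  "hw n x = card {i. i < n \<and> bit x i}"

definition tensor :: "nat \<Rightarrow> (nat \<Rightarrow> bool \<Rightarrow> bool \<Rightarrow> complex) \<Rightarrow> (nat \<Rightarrow> nat \<Rightarrow> complex)" where
  "tensor n f = (\<lambda>x y. \<Prod>i<n. f i (bit x i) (bit y i))"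

text \<open>Single-qubit Paulis: 0 = I, 1 = X, 2 = Y, 3 = Z (row bit, column bit).\<close>
definition pauli1 :: "nat \<Rightarrow> bool \<Rightarrow> bool \<Rightarrow> complex" where
  "pauli1 s a b =
     (if s = 0 then (if a = b then 1 else 0)
      else if s = 1 then (if a = b then 0 else 1)
      else if s = 2 then (if a = b then 0 else if a then \<i> else - \<i>)
      else (if a = b then (if a then -1 else 1) else 0))"

definition pauli_group :: "nat \<Rightarrow> (nat \<Rightarrow> nat \<Rightarrow> complex) set" where
  "pauli_group n = {P. \<exists>c s. c \<in> {1, -1, \<i>, - \<i>} \<and> (\<forall>i<n. s i < 4) \<and>
      mat_eq (2^n) P (\<lambda>x y. c * tensor n (\<lambda>i. pauli1 (s i)) x y)}"

definition clifford :: "nat \<Rightarrow> (nat \<Rightarrow> nat \<Rightarrow> complex) set" where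
  "clifford n = {U. mat_eq (2^n) (mmul (2^n) U (adj U)) idm \<and>
      (\<forall>P\<in>pauli_group n. mmul (2^n) (mmul (2^n) U P) (adj U) \<in> pauli_group n)}"

definition stab_state :: "nat \<Rightarrow> (nat \<Rightarrow> complex) \<Rightarrow> bool" where
  "stab_state n \<psi> \<longleftrightarrow> (\<exists>U\<in>clifford n. \<forall>x<2^n. \<psi> x = U x 0)"

definition stab_cone_on :: "nat \<Rightarrow> nat set \<Rightarrow> (nat \<Rightarrow> nat \<Rightarrow> complex) \<Rightarrow> bool" where
  "stab_cone_on n W \<Omega> \<longleftrightarrow> (\<exists>m (w :: nat \<Rightarrow> real) \<phi>.
      (\<forall>j<m. w j \<ge> 0 \<and> stab_state n (\<phi> j) \<and> (\<forall>x<2^n. \<phi> j x \<noteq> 0 \<longrightarrow> x \<in> W)) \<and>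
      mat_eq (2^n) \<Omega> (\<lambda>x y. \<Sum>j<m. complex_of_real (w j) * proj (\<phi> j) x y))"

definition stab_polytope :: "nat \<Rightarrow> (nat \<Rightarrow> nat \<Rightarrow> complex) set" where
  "stab_polytope n = {\<rho>. \<exists>m (w :: nat \<Rightarrow> real) \<phi>.
      (\<forall>j<m. w j \<ge> 0 \<and> stab_state n (\<phi> j)) \<and> (\<Sum>j<m. w j) = 1 \<and>
      mat_eq (2^n) \<rho> (\<lambda>x y. \<Sum>j<m. complex_of_real (w j) * proj (\<phi> j) x y)}"

text \<open>Amplitude damping Kraus operators: K_False = |0><0| + sqrt(1-g)|1><1|,
  K_True = sqrt g |0><1|.\<close>
definition ad_kraus :: "real \<Rightarrow> bool \<Rightarrow> bool \<Rightarrow> bool \<Rightarrow> complex" where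
  "ad_kraus g t a b =
     (if \<not> t then (if a = b then (if a then complex_of_real (sqrt (1 - g)) else 1) else 0)
      else (if \<not> a \<and> b then complex_of_real (sqrt g) else 0))"

definition ad_channel :: "nat \<Rightarrow> real \<Rightarrow> (nat \<Rightarrow> nat \<Rightarrow> complex) \<Rightarrow> (nat \<Rightarrow> nat \<Rightarrow> complex)" where
  "ad_channel n g \<rho> = (\<lambda>x y. \<Sum>(t::nat)<2^n.
      (let Kt = tensor n (\<lambda>i. ad_kraus g (bit t i)) in
         mmul (2^n) (mmul (2^n) Kt \<rho>) (adj Kt) x y))"

definition D_L :: "nat \<Rightarrow> nat \<Rightarrow> nat \<Rightarrow> complex" where
  "D_L u v = (\<lambda>x. complex_of_real (1 / sqrt 3) * (ket u x + ket v x + ket (xor u v) x))"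

definition psi_L :: "nat \<Rightarrow> nat \<Rightarrow> real \<Rightarrow> real \<Rightarrow> nat \<Rightarrow> complex" where
  "psi_L u v a b = (\<lambda>x. complex_of_real a * ket 0 x + complex_of_real b * D_L u v x)"

definition rho_L :: "nat \<Rightarrow> nat \<Rightarrow> nat \<Rightarrow> real \<Rightarrow> real \<Rightarrow> real \<Rightarrow> (nat \<Rightarrow> nat \<Rightarrow> complex)" where
  "rho_L n u v a b g = ad_channel n g (proj (psi_L u v a b))"

end

(*
  The channel splits \<rho>\<^sub>L(\<gamma>) into the Kraus branches K\<^sub>t|\<psi>\<^sub>L\<rangle>, t \<in> F\<^sub>2\<^sup>n. The branches
  t \<in> L give the 2x2 block on |0\<rangle>, |D\<^sub>L\<rangle>. Any other t lies below at most two of u, v, u+v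
  (as u+v has the same weight as u and v), so its branch is a basis state or an equal superposition
  of two basis states, of weights strictly between 0 and k: a multiple of a stabilizer state.

  Sufficiency: the block is a nonnegative combination of |0\<rangle>\<langle>0| and the stabilizer states
  (\<plusminus>|0\<rangle> + |u\<rangle> + |v\<rangle> + |u+v\<rangle>)/2 exactly when p\<^sub>0 \<ge> p\<^sub>L/3 and c\<^sub>L \<le> p\<^sub>L/\<surd>3.
  Necessity: in a convex decomposition of \<rho> into stabilizer states, equality of the entries of \<rho> on
  L - {0} forces every state to be constant there; since a stabilizer state has an affine support on
  which its modulus is constant, its modulus at 0 then equals that at u. Hence
  \<rho>\<^sub>0\<^sub>0 \<ge> \<rho>\<^sub>u\<^sub>u = p\<^sub>L/3 and |\<rho>\<^sub>0\<^sub>u| \<le> p\<^sub>L/3.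

  The thresholds follow from the monotonicity of \<gamma>\<^sup>k - (1-\<gamma>)\<^sup>k/3 and of (1-\<gamma>)^(k/2).
*)

theory Submission
  imports Defs "Jordan_Normal_Form.Determinant"
begin

unbundle bit_operations_syntax

section \<open>Bit strings\<close>

lemma less_exp_not_bit: "(x::nat) < 2^n \<Longrightarrow> n \<le> i \<Longrightarrow> \<not> bit x i"
  by (metis take_bit_nat_eq_self_iff bit_take_bit_iff linorder_not_le)

lemma eq_if_low_bits_eq:
  assumes "(x::nat) < 2^n" "y < 2^n" "\<And>i. i < n \<Longrightarrow> bit x i = bit y i"
  shows "x = y"
proof (rule bit_eqI)
  fix i show "bit x i = bit y i"
    using assms less_exp_not_bit[of x n i] less_exp_not_bit[of y n i] by (cases "i < n") auto
qed

lemma less_exp_if_high_bits_zero: "(\<And>i. n \<le> i \<Longrightarrow> \<not> bit (x::nat) i) \<Longrightarrow> x < 2^n"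
  by (metis bit_take_bit_iff not_le take_bit_nat_less_exp bit_eqI)

lemma xor_less_exp: "(x::nat) < 2^n \<Longrightarrow> y < 2^n \<Longrightarrow> x XOR y < 2^n"
  by (rule less_exp_if_high_bits_zero) (simp add: bit_xor_iff less_exp_not_bit)

lemma xor_eq_0_iff: "(x::nat) XOR y = 0 \<longleftrightarrow> x = y"
  by (metis xor_self_eq xor.assoc xor.left_neutral)

lemma xor_right_cancel: "(x::nat) XOR t = y XOR t \<longleftrightarrow> x = y"
  by (metis xor.assoc xor_self_eq xor.right_neutral)

lemma xor_eq_left_iff: "(x::nat) XOR y = x \<longleftrightarrow> y = 0"
  by (metis xor.assoc xor_self_eq xor.left_neutral)

lemma xor_eq_right_iff: "(x::nat) XOR y = y \<longleftrightarrow> x = 0"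
  by (metis xor.assoc xor_self_eq xor.right_neutral)

lemma bit_exp_add:
  assumes "(t::nat) < 2^n"
  shows "bit (2^n + t) i = (i = n \<or> bit t i)"
proof -
  have "2^n + t = t OR 2^n"
    by (metis add.commute assms less_exp_not_bit disjunctive_add or.commute bit_exp_iff
          and_exp_eq_0_iff_not_bit bit_and_iff linorder_le_less_linear order.refl)
  then show ?thesis
    using assms less_exp_not_bit[of t n n] by (auto simp: bit_or_iff bit_exp_iff)
qed

lemma sum_bitstrings_prod:
  fixes f :: "nat \<Rightarrow> bool \<Rightarrow> 'a::comm_semiring_1"
  shows "(\<Sum>t<(2::nat)^n. \<Prod>i<n. f i (bit t i)) = (\<Prod>i<n. f i False + f i True)"
proof (induction n arbitrary: f)
  case 0 show ?case by simp
next
  case (Suc n)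
  have split: "{..<(2::nat)^Suc n} = {..<2^n} \<union> (\<lambda>t. 2^n + t) ` {..<2^n}"
  proof -
    have "t \<in> (\<lambda>t. 2^n + t) ` {..<2^n}" if "t < 2^Suc n" "\<not> t < 2^n" for t :: nat
      using that by (intro image_eqI[of _ _ "t - 2^n"]) auto
    then show ?thesis by auto
  qed
  have "(\<Sum>t::nat<2^Suc n. \<Prod>i<Suc n. f i (bit t i))
      = (\<Sum>t::nat<2^n. \<Prod>i<Suc n. f i (bit t i)) + (\<Sum>t::nat<2^n. \<Prod>i<Suc n. f i (bit (2^n + t) i))"
    unfolding split by (subst sum.union_disjoint) (auto simp: sum.reindex inj_on_def)
  also have "(\<Sum>t::nat<2^n. \<Prod>i<Suc n. f i (bit t i)) = (\<Sum>t::nat<2^n. \<Prod>i<n. f i (bit t i)) * f n False"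
    by (simp add: sum_distrib_right less_exp_not_bit)
  also have "(\<Sum>t::nat<2^n. \<Prod>i<Suc n. f i (bit (2^n + t) i)) = (\<Sum>t::nat<2^n. \<Prod>i<n. f i (bit t i)) * f n True"
    by (auto simp: sum_distrib_right bit_exp_add intro!: sum.cong prod.cong)
  finally show ?case using Suc by (simp add: distrib_right mult.commute)
qed

lemma prod_if_else_zero:
  "(\<Prod>i<(n::nat). if P i then g i else (0::'a::comm_semiring_1)) = (if \<forall>i<n. P i then \<Prod>i<n. g i else 0)"
  by (induction n) (auto simp: less_Suc_eq)

lemma prod_if_if_eq_powers:
  "(\<Prod>i<(n::nat). if P i then (a::'a::comm_monoid_mult) else if Q i then c else 1)
     = a ^ card {i. i < n \<and> P i} * c ^ card {i. i < n \<and> Q i \<and> \<not> P i}"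
proof -
  have "(\<Prod>i<n. if P i then a else if Q i then c else 1)
      = (\<Prod>i\<in>{..<n} \<inter> {i. P i}. a) * (\<Prod>i\<in>{..<n} \<inter> - {i. P i}. if Q i then c else 1)"
    by (rule prod.If_cases) simp
  also have "(\<Prod>i\<in>{..<n} \<inter> - {i. P i}. if Q i then c else 1)
      = (\<Prod>i\<in>({..<n} \<inter> - {i. P i}) \<inter> {i. Q i}. c) * (\<Prod>i\<in>({..<n} \<inter> - {i. P i}) \<inter> - {i. Q i}. 1)"
    by (rule prod.If_cases) simp
  also have "{..<n} \<inter> {i. P i} = {i. i < n \<and> P i}" by auto
  also have "({..<n} \<inter> - {i. P i}) \<inter> {i. Q i} = {i. i < n \<and> Q i \<and> \<not> P i}" by auto
  finally show ?thesis by simp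
qed

definition bits_le :: "nat \<Rightarrow> nat \<Rightarrow> nat \<Rightarrow> bool" where
  "bits_le n t b \<longleftrightarrow> (\<forall>i<n. bit t i \<longrightarrow> bit b i)"

lemma hw_eq_0_iff: "x < 2^n \<Longrightarrow> hw n x = 0 \<longleftrightarrow> x = 0"
  using eq_if_low_bits_eq[of x n 0] by (auto simp: hw_def)

lemma bits_le_imp_hw_le: "bits_le n t b \<Longrightarrow> hw n t \<le> hw n b"
  unfolding hw_def bits_le_def by (rule card_mono) auto

lemma card_bits_diff:
  "bits_le n t b \<Longrightarrow> card {i. i < n \<and> bit b i \<and> \<not> bit t i} = hw n b - hw n t"
proof -
  assume "bits_le n t b"
  then have "{i. i < n \<and> bit b i \<and> \<not> bit t i} = {i. i < n \<and> bit b i} - {i. i < n \<and> bit t i}"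
    and "{i. i < n \<and> bit t i} \<subseteq> {i. i < n \<and> bit b i}"
    by (auto simp: bits_le_def)
  then show ?thesis unfolding hw_def by (simp add: card_Diff_subset)
qed

lemma hw_xor_bits_le: "bits_le n t b \<Longrightarrow> hw n (b XOR t) = hw n b - hw n t"
proof -
  assume le: "bits_le n t b"
  then have "{i. i < n \<and> bit (b XOR t) i} = {i. i < n \<and> bit b i \<and> \<not> bit t i}"
    by (auto simp: bit_xor_iff bits_le_def)
  then show ?thesis using card_bits_diff[OF le] by (simp add: hw_def)
qed

lemma bits_le_hw_eq_imp_eq:
  assumes "t < 2^n" "b < 2^n" "bits_le n t b" "hw n t = hw n b"
  shows "t = b"
proof -
  have "{i. i < n \<and> bit t i} = {i. i < n \<and> bit b i}"
    using assms(3,4) by (intro card_subset_eq) (auto simp: hw_def bits_le_def)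
  then show ?thesis using eq_if_low_bits_eq[OF assms(1,2)] by blast
qed

lemma exists_bit_diff:
  assumes "x < 2^n" "y < 2^n" "hw n x = hw n y" "x \<noteq> y"
  shows "\<exists>j<n. bit x j \<and> \<not> bit y j"
  using bits_le_hw_eq_imp_eq[OF assms(1,2) _ assms(3)] assms(4) by (auto simp: bits_le_def)

section \<open>Matrices as functions\<close>

lemma mmul_assoc: "mmul N (mmul N A B) C = mmul N A (mmul N B C)"
proof (intro ext)
  fix i j
  have "mmul N (mmul N A B) C i j = (\<Sum>l<N. \<Sum>l'<N. A i l' * B l' l * C l j)"
    by (simp add: mmul_def sum_distrib_right)
  also have "\<dots> = (\<Sum>l'<N. \<Sum>l<N. A i l' * B l' l * C l j)" by (rule sum.swap)
  also have "\<dots> = mmul N A (mmul N B C) i j"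
    by (simp add: mmul_def sum_distrib_left mult.assoc)
  finally show "mmul N (mmul N A B) C i j = mmul N A (mmul N B C) i j" .
qed

lemma adj_mmul: "adj (mmul N A B) = mmul N (adj B) (adj A)"
  by (simp add: adj_def mmul_def fun_eq_iff mult.commute)

lemma mmul_idm_left: "i < N \<Longrightarrow> mmul N idm A i j = A i j"
proof -
  assume "i < N"
  have "mmul N idm A i j = (\<Sum>l<N. if i = l then A l j else 0)"
    unfolding mmul_def idm_def by (rule sum.cong) auto
  then show ?thesis using \<open>i < N\<close> by simp
qed

lemma mmul_idm_right: "j < N \<Longrightarrow> mmul N A idm i j = A i j"
  by (simp add: mmul_def idm_def if_distrib cong: if_cong)

lemma mmul_cong_right: "mat_eq N B B' \<Longrightarrow> i < N \<Longrightarrow> j < N \<Longrightarrow> mmul N A B i j = mmul N A B' i j"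
  by (simp add: mmul_def mat_eq_def)

lemma mmul_cong_left: "mat_eq N A A' \<Longrightarrow> i < N \<Longrightarrow> j < N \<Longrightarrow> mmul N A B i j = mmul N A' B i j"
  by (simp add: mmul_def mat_eq_def)

lemma mat_eq_refl: "mat_eq N A A"
  by (simp add: mat_eq_def)

lemma mat_eq_sym: "mat_eq N A B \<Longrightarrow> mat_eq N B A"
  by (simp add: mat_eq_def)

lemma mat_eq_trans: "mat_eq N A B \<Longrightarrow> mat_eq N B C \<Longrightarrow> mat_eq N A C"
  by (simp add: mat_eq_def)

lemma conj_mat_eq_cong:
  "mat_eq N P P' \<Longrightarrow> mat_eq N (mmul N (mmul N U P) (adj U)) (mmul N (mmul N U P') (adj U))"
  unfolding mat_eq_def mmul_def by (auto intro!: sum.cong)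

lemma jnf_mat_mult_entry:
  assumes "i < N" "j < N"
  shows "(mat N N (\<lambda>(i,j). A i j) * mat N N (\<lambda>(i,j). B i j)) $$ (i,j) = mmul N A B i j"
  using assms by (simp add: mmul_def scalar_prod_def lessThan_atLeast0)

lemma unitary_left_inverse:
  assumes U: "mat_eq N (mmul N U (adj U)) idm"
  shows "mat_eq N (mmul N (adj U) U) idm"
proof -
  define A where "A = mat N N (\<lambda>(i,j). U i j)"
  define B where "B = mat N N (\<lambda>(i,j). adj U i j)"
  have "A * B = 1\<^sub>m N"
  proof (rule eq_matI)
    fix i j assume "i < dim_row (1\<^sub>m N :: complex mat)" "j < dim_col (1\<^sub>m N :: complex mat)"
    then have ij: "i < N" "j < N" by auto
    show "(A * B) $$ (i,j) = 1\<^sub>m N $$ (i,j)"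
      using U ij unfolding A_def B_def jnf_mat_mult_entry[OF ij] by (simp add: mat_eq_def idm_def)
  qed (auto simp: A_def B_def)
  then have BA: "B * A = 1\<^sub>m N"
    by (rule mat_mult_left_right_inverse[rotated 2]) (auto simp: A_def B_def)
  show ?thesis unfolding mat_eq_def
  proof (intro allI impI)
    fix i j assume ij: "i < N" "j < N"
    have "mmul N (adj U) U i j = (B * A) $$ (i,j)"
      unfolding A_def B_def jnf_mat_mult_entry[OF ij] ..
    then show "mmul N (adj U) U i j = idm i j" using ij BA by (simp add: idm_def)
  qed
qed

definition scale_mat :: "complex \<Rightarrow> ('a \<Rightarrow> 'a \<Rightarrow> complex) \<Rightarrow> 'a \<Rightarrow> 'a \<Rightarrow> complex" where
  "scale_mat c A = (\<lambda>x y. c * A x y)"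

lemma mmul_scale_left: "mmul N (scale_mat c A) B = scale_mat c (mmul N A B)"
  by (simp add: mmul_def scale_mat_def sum_distrib_left mult.assoc fun_eq_iff)

lemma mmul_scale_right: "mmul N A (scale_mat c B) = scale_mat c (mmul N A B)"
  by (simp add: mmul_def scale_mat_def sum_distrib_left mult.left_commute fun_eq_iff)

lemma scale_mat_scale_mat: "scale_mat c (scale_mat d A) = scale_mat (c * d) A"
  by (simp add: scale_mat_def fun_eq_iff)

lemma scale_mat_1: "scale_mat 1 A = A"
  by (simp add: scale_mat_def fun_eq_iff)

definition qmul :: "(bool \<Rightarrow> bool \<Rightarrow> complex) \<Rightarrow> (bool \<Rightarrow> bool \<Rightarrow> complex) \<Rightarrow> bool \<Rightarrow> bool \<Rightarrow> complex" where
  "qmul a b = (\<lambda>p q. a p False * b False q + a p True * b True q)"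

definition qadj :: "(bool \<Rightarrow> bool \<Rightarrow> complex) \<Rightarrow> bool \<Rightarrow> bool \<Rightarrow> complex" where
  "qadj a = (\<lambda>p q. cnj (a q p))"

definition qid :: "bool \<Rightarrow> bool \<Rightarrow> complex" where
  "qid = (\<lambda>p q. if p = q then 1 else 0)"

lemma tensor_cong: "(\<And>i. i < n \<Longrightarrow> f i = g i) \<Longrightarrow> tensor n f = tensor n g"
  by (simp add: tensor_def fun_eq_iff)

lemma mmul_tensor: "mmul (2^n) (tensor n f) (tensor n g) = tensor n (\<lambda>i. qmul (f i) (g i))"
proof (intro ext)
  fix x y
  have "mmul (2^n) (tensor n f) (tensor n g) x y
      = (\<Sum>l::nat<2^n. \<Prod>i<n. f i (bit x i) (bit l i) * g i (bit l i) (bit y i))"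
    by (simp add: mmul_def tensor_def prod.distrib)
  also have "\<dots> = (\<Prod>i<n. f i (bit x i) False * g i False (bit y i) + f i (bit x i) True * g i True (bit y i))"
    by (rule sum_bitstrings_prod[where f = "\<lambda>i b. f i (bit x i) b * g i b (bit y i)"])
  also have "\<dots> = tensor n (\<lambda>i. qmul (f i) (g i)) x y"
    by (simp add: tensor_def qmul_def)
  finally show "mmul (2^n) (tensor n f) (tensor n g) x y = tensor n (\<lambda>i. qmul (f i) (g i)) x y" .
qed

lemma adj_tensor: "adj (tensor n f) = tensor n (\<lambda>i. qadj (f i))"
  by (simp add: adj_def tensor_def qadj_def cnj_prod)

lemma tensor_scale_mat: "tensor n (\<lambda>i. scale_mat (c i) (f i)) = scale_mat (\<Prod>i<n. c i) (tensor n f)"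
  by (simp add: tensor_def scale_mat_def prod.distrib fun_eq_iff)

lemma tensor_qid: "x < 2^n \<Longrightarrow> y < 2^n \<Longrightarrow> tensor n (\<lambda>i. qid) x y = idm x y"
  using eq_if_low_bits_eq[of x n y] by (auto simp: tensor_def qid_def idm_def prod_if_else_zero)

lemma sum_mult_ket: "a < N \<Longrightarrow> (\<Sum>l<N. f l * ket a l) = f a"
proof -
  assume a: "a < N"
  have "(\<Sum>l<N. f l * ket a l) = (\<Sum>l<N. if l = a then f a else 0)"
    by (rule sum.cong) (auto simp: ket_def)
  then show ?thesis using a by simp
qed

lemma cnj_ket [simp]: "cnj (ket p x) = ket p x"
  by (simp add: ket_def)

section \<open>The Pauli group in \<open>X\<^sup>a Z\<^sup>b\<close> normal form\<close>

definition phases :: "complex set" where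
  "phases = {1, -1, \<i>, - \<i>}"

definition sgnb :: "bool \<Rightarrow> complex" where
  "sgnb b = (if b then -1 else 1)"

text \<open>\<open>pauli_xz a b\<close> is the single-qubit operator \<open>X\<^sup>a Z\<^sup>b\<close>.\<close>

definition pauli_xz :: "bool \<Rightarrow> bool \<Rightarrow> bool \<Rightarrow> bool \<Rightarrow> complex" where
  "pauli_xz a b = (\<lambda>p q. if q = (p \<noteq> a) then sgnb (b \<and> q) else 0)"

definition pauli_string :: "nat \<Rightarrow> complex \<Rightarrow> (nat \<Rightarrow> bool) \<Rightarrow> (nat \<Rightarrow> bool) \<Rightarrow> nat \<Rightarrow> nat \<Rightarrow> complex" where
  "pauli_string n c A B = scale_mat c (tensor n (\<lambda>i. pauli_xz (A i) (B i)))"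

definition pauli_phase :: "nat \<Rightarrow> complex" where
  "pauli_phase s = (if s = 2 then \<i> else 1)"

lemma phases_mult: "a \<in> phases \<Longrightarrow> b \<in> phases \<Longrightarrow> a * b \<in> phases"
  by (auto simp: phases_def)

lemma phases_cnj: "a \<in> phases \<Longrightarrow> cnj a \<in> phases"
  by (auto simp: phases_def)

lemma one_in_phases: "1 \<in> phases"
  by (simp add: phases_def)

lemma sgnb_in_phases: "sgnb b \<in> phases"
  by (simp add: phases_def sgnb_def)

lemma pauli_phase_in_phases: "pauli_phase s \<in> phases"
  by (simp add: phases_def pauli_phase_def)

lemma phases_cnj_mult: "a \<in> phases \<Longrightarrow> cnj a * a = 1"
  by (auto simp: phases_def)

lemma norm_phases: "c \<in> phases \<Longrightarrow> cmod c = 1"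
  by (auto simp: phases_def)

lemma prod_in_phases: "(\<And>i. i < n \<Longrightarrow> c i \<in> phases) \<Longrightarrow> (\<Prod>i<(n::nat). c i) \<in> phases"
  by (induction n) (auto simp: one_in_phases phases_mult)

lemma pauli1_eq_scale_pauli_xz:
  "s < 4 \<Longrightarrow> pauli1 s = scale_mat (pauli_phase s) (pauli_xz (s = 1 \<or> s = 2) (s = 2 \<or> s = 3))"
  by (auto simp: pauli1_def scale_mat_def pauli_xz_def pauli_phase_def sgnb_def fun_eq_iff
      numeral_eq_Suc less_Suc_eq)

lemma pauli_group_iff:
  "P \<in> pauli_group n \<longleftrightarrow> (\<exists>c\<in>phases. \<exists>A B. mat_eq (2^n) P (pauli_string n c A B))"
proof
  assume "P \<in> pauli_group n"
  then obtain c s where c: "c \<in> phases" and s: "\<forall>i<n. s i < 4"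
    and eq: "mat_eq (2^n) P (\<lambda>x y. c * tensor n (\<lambda>i. pauli1 (s i)) x y)"
    unfolding pauli_group_def phases_def by blast
  let ?A = "\<lambda>i. s i = 1 \<or> s i = 2" and ?B = "\<lambda>i. s i = 2 \<or> s i = 3"
  have "tensor n (\<lambda>i. pauli1 (s i)) = tensor n (\<lambda>i. scale_mat (pauli_phase (s i)) (pauli_xz (?A i) (?B i)))"
    using s by (intro tensor_cong) (simp add: pauli1_eq_scale_pauli_xz)
  also have "\<dots> = scale_mat (\<Prod>i<n. pauli_phase (s i)) (tensor n (\<lambda>i. pauli_xz (?A i) (?B i)))"
    by (rule tensor_scale_mat)
  finally have "(\<lambda>x y. c * tensor n (\<lambda>i. pauli1 (s i)) x y)
      = pauli_string n (c * (\<Prod>i<n. pauli_phase (s i))) ?A ?B"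
    by (simp add: pauli_string_def scale_mat_def fun_eq_iff mult.assoc)
  moreover have "c * (\<Prod>i<n. pauli_phase (s i)) \<in> phases"
    using c by (intro phases_mult prod_in_phases pauli_phase_in_phases)
  ultimately show "\<exists>c\<in>phases. \<exists>A B. mat_eq (2^n) P (pauli_string n c A B)"
    using eq by (intro bexI exI) auto
next
  assume "\<exists>c\<in>phases. \<exists>A B. mat_eq (2^n) P (pauli_string n c A B)"
  then obtain c A B where c: "c \<in> phases" and eq: "mat_eq (2^n) P (pauli_string n c A B)" by blast
  define s where "s i = (if A i then (if B i then 2 else 1) else (if B i then 3 else 0::nat))" for i
  have s4: "\<forall>i<n. s i < 4" by (simp add: s_def)
  have xz: "pauli_xz (A i) (B i) = scale_mat (cnj (pauli_phase (s i))) (pauli1 (s i))" for i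
  proof -
    have "pauli1 (s i) = scale_mat (pauli_phase (s i)) (pauli_xz (A i) (B i))"
      by (subst pauli1_eq_scale_pauli_xz) (auto simp: s_def)
    then show ?thesis using phases_cnj_mult[OF pauli_phase_in_phases[of "s i"]]
      by (simp add: scale_mat_scale_mat scale_mat_1)
  qed
  have "pauli_string n c A B
      = (\<lambda>x y. (c * (\<Prod>i<n. cnj (pauli_phase (s i)))) * tensor n (\<lambda>i. pauli1 (s i)) x y)"
    unfolding pauli_string_def xz tensor_scale_mat by (simp add: scale_mat_def fun_eq_iff mult.assoc)
  moreover have "c * (\<Prod>i<n. cnj (pauli_phase (s i))) \<in> {1, -1, \<i>, - \<i>}"
    using c unfolding phases_def[symmetric]
    by (intro phases_mult prod_in_phases phases_cnj pauli_phase_in_phases)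
  ultimately show "P \<in> pauli_group n"
    unfolding pauli_group_def using s4 eq by (intro CollectI exI[of _ s]) auto
qed

lemma pauli_group_mat_eq: "P \<in> pauli_group n \<Longrightarrow> mat_eq (2^n) P Q \<Longrightarrow> Q \<in> pauli_group n"
  unfolding pauli_group_iff by (meson mat_eq_sym mat_eq_trans)

lemma pauli_string_in_pauli_group: "c \<in> phases \<Longrightarrow> pauli_string n c A B \<in> pauli_group n"
  unfolding pauli_group_iff using mat_eq_refl by blast

lemma scale_mat_in_pauli_group:
  assumes c: "c \<in> phases" and P: "P \<in> pauli_group n"
  shows "scale_mat c P \<in> pauli_group n"
proof -
  obtain d A B where d: "d \<in> phases" and eq: "mat_eq (2^n) P (pauli_string n d A B)"
    using P unfolding pauli_group_iff by blast
  have "mat_eq (2^n) (scale_mat c P) (pauli_string n (c * d) A B)"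
    using eq by (simp add: mat_eq_def scale_mat_def pauli_string_def mult.assoc)
  then show ?thesis
    using pauli_group_mat_eq pauli_string_in_pauli_group phases_mult[OF c d] by (metis mat_eq_sym)
qed

section \<open>Clifford unitaries\<close>

lemma cliffordI:
  assumes unitary: "mat_eq (2^n) (mmul (2^n) U (adj U)) idm"
    and conj: "\<And>A B. mmul (2^n) (mmul (2^n) U (tensor n (\<lambda>i. pauli_xz (A i) (B i)))) (adj U) \<in> pauli_group n"
  shows "U \<in> clifford n"
  unfolding clifford_def
proof (intro CollectI conjI ballI unitary)
  fix P assume "P \<in> pauli_group n"
  then obtain c A B where c: "c \<in> phases" and eq: "mat_eq (2^n) P (pauli_string n c A B)"
    unfolding pauli_group_iff by blast
  have "mmul (2^n) (mmul (2^n) U (pauli_string n c A B)) (adj U)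
      = scale_mat c (mmul (2^n) (mmul (2^n) U (tensor n (\<lambda>i. pauli_xz (A i) (B i)))) (adj U))"
    by (simp add: pauli_string_def mmul_scale_left mmul_scale_right)
  then have "mmul (2^n) (mmul (2^n) U (pauli_string n c A B)) (adj U) \<in> pauli_group n"
    using scale_mat_in_pauli_group[OF c conj] by simp
  then show "mmul (2^n) (mmul (2^n) U P) (adj U) \<in> pauli_group n"
    using conj_mat_eq_cong[OF eq] pauli_group_mat_eq mat_eq_sym by blast
qed

lemma clifford_mmul:
  assumes U: "U \<in> clifford n" and V: "V \<in> clifford n"
  shows "mmul (2^n) U V \<in> clifford n"
proof -
  let ?N = "2^n::nat"
  have Uu: "mat_eq ?N (mmul ?N U (adj U)) idm"
    and Uc: "\<And>P. P \<in> pauli_group n \<Longrightarrow> mmul ?N (mmul ?N U P) (adj U) \<in> pauli_group n"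
    using U by (auto simp: clifford_def)
  have Vu: "mat_eq ?N (mmul ?N V (adj V)) idm"
    and Vc: "\<And>P. P \<in> pauli_group n \<Longrightarrow> mmul ?N (mmul ?N V P) (adj V) \<in> pauli_group n"
    using V by (auto simp: clifford_def)
  have "mat_eq ?N (mmul ?N (mmul ?N U V) (adj (mmul ?N U V))) idm"
    unfolding mat_eq_def
  proof (intro allI impI)
    fix i j assume ij: "i < ?N" "j < ?N"
    have "mmul ?N (mmul ?N U V) (adj (mmul ?N U V)) i j = mmul ?N U (mmul ?N (mmul ?N V (adj V)) (adj U)) i j"
      by (simp add: adj_mmul mmul_assoc)
    also have "\<dots> = mmul ?N U (mmul ?N idm (adj U)) i j"
      using Vu mmul_cong_left by (intro mmul_cong_right[OF _ ij]) (auto simp: mat_eq_def)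
    also have "\<dots> = mmul ?N U (adj U) i j"
      using mmul_idm_left by (intro mmul_cong_right[OF _ ij]) (auto simp: mat_eq_def)
    also have "\<dots> = idm i j" using Uu ij by (simp add: mat_eq_def)
    finally show "mmul ?N (mmul ?N U V) (adj (mmul ?N U V)) i j = idm i j" .
  qed
  moreover have "mmul ?N (mmul ?N (mmul ?N U V) P) (adj (mmul ?N U V)) \<in> pauli_group n"
    if "P \<in> pauli_group n" for P
  proof -
    have "mmul ?N (mmul ?N (mmul ?N U V) P) (adj (mmul ?N U V))
        = mmul ?N (mmul ?N U (mmul ?N (mmul ?N V P) (adj V))) (adj U)"
      by (simp add: adj_mmul mmul_assoc)
    then show ?thesis using Uc Vc that by simp
  qed
  ultimately show ?thesis by (simp add: clifford_def)
qed

lemma tensor_clifford: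
  assumes unitary: "\<And>i. i < n \<Longrightarrow> qmul (g i) (qadj (g i)) = qid"
    and conj: "\<And>i a b. i < n \<Longrightarrow>
      \<exists>\<sigma>\<in>phases. \<exists>a' b'. qmul (qmul (g i) (pauli_xz a b)) (qadj (g i)) = scale_mat \<sigma> (pauli_xz a' b')"
  shows "tensor n g \<in> clifford n"
proof (rule cliffordI)
  have "mmul (2^n) (tensor n g) (adj (tensor n g)) = tensor n (\<lambda>i. qid)"
    unfolding adj_tensor mmul_tensor by (rule tensor_cong) (simp add: unitary)
  then show "mat_eq (2^n) (mmul (2^n) (tensor n g) (adj (tensor n g))) idm"
    by (simp add: mat_eq_def tensor_qid)
next
  fix A B :: "nat \<Rightarrow> bool"
  have "\<forall>i. \<exists>\<sigma> a' b'. i < n \<longrightarrow> \<sigma> \<in> phases \<and>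
      qmul (qmul (g i) (pauli_xz (A i) (B i))) (qadj (g i)) = scale_mat \<sigma> (pauli_xz a' b')"
    using conj by blast
  then obtain \<sigma> a' b' where H: "\<And>i. i < n \<Longrightarrow> \<sigma> i \<in> phases \<and>
      qmul (qmul (g i) (pauli_xz (A i) (B i))) (qadj (g i)) = scale_mat (\<sigma> i) (pauli_xz (a' i) (b' i))"
    by metis
  have "mmul (2^n) (mmul (2^n) (tensor n g) (tensor n (\<lambda>i. pauli_xz (A i) (B i)))) (adj (tensor n g))
      = tensor n (\<lambda>i. scale_mat (\<sigma> i) (pauli_xz (a' i) (b' i)))"
    unfolding adj_tensor mmul_tensor by (rule tensor_cong) (simp add: H)
  also have "\<dots> = pauli_string n (\<Prod>i<n. \<sigma> i) a' b'"
    by (simp add: tensor_scale_mat pauli_string_def)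
  finally show "mmul (2^n) (mmul (2^n) (tensor n g) (tensor n (\<lambda>i. pauli_xz (A i) (B i)))) (adj (tensor n g))
      \<in> pauli_group n"
    using pauli_string_in_pauli_group prod_in_phases H by metis
qed

definition monomial_mat :: "(nat \<Rightarrow> nat) \<Rightarrow> (nat \<Rightarrow> complex) \<Rightarrow> nat \<Rightarrow> nat \<Rightarrow> complex" where
  "monomial_mat \<pi> d = (\<lambda>x y. if y = \<pi> x then d x else 0)"

lemma mmul_monomial_mat:
  assumes "x < 2^n" "\<pi> x < 2^n"
  shows "mmul (2^n) (monomial_mat \<pi> d) W x y = d x * W (\<pi> x) y"
proof -
  have "mmul (2^n) (monomial_mat \<pi> d) W x y = (\<Sum>m<2^n. if m = \<pi> x then d x * W m y else 0)"
    unfolding mmul_def monomial_mat_def by (rule sum.cong) auto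
  then show ?thesis using assms by simp
qed

lemma monomial_mat_conj:
  assumes "x < 2^n" "y < 2^n" "\<forall>x<2^n. \<pi> x < (2::nat)^n"
  shows "mmul (2^n) (mmul (2^n) (monomial_mat \<pi> d) P) (adj (monomial_mat \<pi> d)) x y
    = d x * cnj (d y) * P (\<pi> x) (\<pi> y)"
proof -
  have row: "mmul (2^n) (monomial_mat \<pi> d) P x l = d x * P (\<pi> x) l" for l
    using assms by (simp add: mmul_monomial_mat)
  have "mmul (2^n) (mmul (2^n) (monomial_mat \<pi> d) P) (adj (monomial_mat \<pi> d)) x y
     = (\<Sum>l<2^n. d x * P (\<pi> x) l * adj (monomial_mat \<pi> d) l y)"
    by (simp add: mmul_def[of _ "mmul _ _ _"] row)
  also have "\<dots> = (\<Sum>l<2^n. if l = \<pi> y then d x * P (\<pi> x) l * cnj (d y) else 0)"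
    by (intro sum.cong) (auto simp: adj_def monomial_mat_def)
  finally show ?thesis using assms by (simp add: mult_ac)
qed

lemma monomial_mat_clifford:
  assumes \<pi>_less: "\<forall>x<2^n. \<pi> x < (2::nat)^n" and \<pi>_inv: "\<forall>x<2^n. \<pi> (\<pi> x) = x"
    and d_unit: "\<forall>x. d x * cnj (d x) = 1"
    and conj: "\<And>A B. \<exists>\<sigma>\<in>phases. \<exists>A' B'. \<forall>x<2^n. \<forall>y<2^n.
        d x * cnj (d y) * tensor n (\<lambda>i. pauli_xz (A i) (B i)) (\<pi> x) (\<pi> y)
          = \<sigma> * tensor n (\<lambda>i. pauli_xz (A' i) (B' i)) x y"
  shows "monomial_mat \<pi> d \<in> clifford n"
proof (rule cliffordI)
  show "mat_eq (2^n) (mmul (2^n) (monomial_mat \<pi> d) (adj (monomial_mat \<pi> d))) idm"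
    unfolding mat_eq_def
  proof (intro allI impI)
    fix x y :: nat assume xy: "x < 2^n" "y < 2^n"
    have "mmul (2^n) (monomial_mat \<pi> d) (adj (monomial_mat \<pi> d)) x y
        = (\<Sum>l<2^n. if l = \<pi> x then (if \<pi> x = \<pi> y then d x * cnj (d y) else 0) else 0)"
      unfolding mmul_def monomial_mat_def adj_def by (rule sum.cong) auto
    also have "\<dots> = (if \<pi> x = \<pi> y then d x * cnj (d y) else 0)"
      using xy \<pi>_less by simp
    also have "\<dots> = idm x y"
      using xy \<pi>_inv d_unit by (auto simp: idm_def) (metis)
    finally show "mmul (2^n) (monomial_mat \<pi> d) (adj (monomial_mat \<pi> d)) x y = idm x y" .
  qed
next
  fix A B :: "nat \<Rightarrow> bool"
  obtain \<sigma> A' B' where \<sigma>: "\<sigma> \<in> phases" and H: "\<forall>x<2^n. \<forall>y<2^n.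
        d x * cnj (d y) * tensor n (\<lambda>i. pauli_xz (A i) (B i)) (\<pi> x) (\<pi> y)
          = \<sigma> * tensor n (\<lambda>i. pauli_xz (A' i) (B' i)) x y"
    using conj by blast
  have "mat_eq (2^n) (pauli_string n \<sigma> A' B')
      (mmul (2^n) (mmul (2^n) (monomial_mat \<pi> d) (tensor n (\<lambda>i. pauli_xz (A i) (B i)))) (adj (monomial_mat \<pi> d)))"
    unfolding mat_eq_def using H by (simp add: monomial_mat_conj[OF _ _ \<pi>_less] pauli_string_def scale_mat_def)
  then show "mmul (2^n) (mmul (2^n) (monomial_mat \<pi> d) (tensor n (\<lambda>i. pauli_xz (A i) (B i))))
      (adj (monomial_mat \<pi> d)) \<in> pauli_group n"
    using pauli_group_mat_eq pauli_string_in_pauli_group[OF \<sigma>] by blast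
qed

section \<open>Clifford gates\<close>

lemma sgnb_xor: "sgnb ((p \<noteq> q) \<and> y) = sgnb (p \<and> y) * sgnb (q \<and> y)"
  by (auto simp: sgnb_def)

lemma sgnb_cnj [simp]: "cnj (sgnb p) = sgnb p"
  by (auto simp: sgnb_def)

lemma sgnb_mult_self [simp]: "sgnb p * sgnb p = 1"
  by (auto simp: sgnb_def)

lemma sgnb_False [simp]: "sgnb False = 1"
  by (simp add: sgnb_def)

lemma prod_sgnb_cases: "(\<Prod>i<(n::nat). sgnb (P i)) = 1 \<or> (\<Prod>i<n. sgnb (P i)) = -1"
  by (induction n) (auto simp: sgnb_def)

lemma prod_sgnb_eq_sgnb: "(\<Prod>i<(n::nat). sgnb (P i)) = sgnb ((\<Prod>i<n. sgnb (P i)) = -1)"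
  using prod_sgnb_cases[of P n] by (auto simp: sgnb_def)

lemma norm_prod_sgnb: "cmod (\<Prod>i<(n::nat). sgnb (P i)) = 1"
  using prod_sgnb_cases[of P n] by auto

lemma prod_sgnb_xor:
  "(\<Prod>i<(n::nat). sgnb ((P i \<noteq> Q i) \<and> Y i)) = (\<Prod>i<n. sgnb (P i \<and> Y i)) * (\<Prod>i<n. sgnb (Q i \<and> Y i))"
  by (simp only: sgnb_xor prod.distrib)

lemma prod_sgnb_single: "(j::nat) < n \<Longrightarrow> (\<Prod>i<n. sgnb ((i = j \<and> a) \<and> Y i)) = sgnb (a \<and> Y j)"
proof -
  assume j: "j < n"
  have "(\<Prod>i<n. sgnb ((i = j \<and> a) \<and> Y i)) = (\<Prod>i<n. if i = j then sgnb (a \<and> Y j) else 1)"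
    by (rule prod.cong) (auto simp: sgnb_def)
  also have "\<dots> = sgnb (a \<and> Y j)" using j by (simp add: prod.delta)
  finally show ?thesis .
qed

lemma tensor_pauli_xz_eq:
  "tensor n (\<lambda>i. pauli_xz (A i) (B i)) x y
     = (if \<forall>i<n. bit y i = (bit x i \<noteq> A i) then \<Prod>i<n. sgnb (B i \<and> bit y i) else 0)"
  unfolding tensor_def pauli_xz_def by (rule prod_if_else_zero)

lemma stab_stateI: "U \<in> clifford n \<Longrightarrow> (\<And>x. x < 2^n \<Longrightarrow> \<phi> x = U x 0) \<Longrightarrow> stab_state n \<phi>"
  unfolding stab_state_def by blast

definition shift_gate :: "nat \<Rightarrow> nat \<Rightarrow> nat \<Rightarrow> complex" where
  "shift_gate a = monomial_mat (\<lambda>x. x XOR a) (\<lambda>_. 1)"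

lemma pauli_xz_flip: "pauli_xz A B (p \<noteq> c) (q \<noteq> c) = sgnb (B \<and> c) * pauli_xz A B p q"
  by (cases A; cases B; cases c; cases p; cases q) (auto simp: pauli_xz_def sgnb_def)

lemma shift_gate_clifford: "a < 2^n \<Longrightarrow> shift_gate a \<in> clifford n"
  unfolding shift_gate_def
proof (rule monomial_mat_clifford)
  assume a: "a < 2^n"
  show "\<forall>x<2^n. x XOR a < (2::nat)^n" using a xor_less_exp by blast
  show "\<forall>x<2^n. (x XOR a) XOR a = x" by (simp add: xor.assoc)
  show "\<forall>x::nat. (1::complex) * cnj 1 = 1" by simp
  fix A B :: "nat \<Rightarrow> bool"
  have "\<forall>x<2^n. \<forall>y<2^n. 1 * cnj 1 * tensor n (\<lambda>i. pauli_xz (A i) (B i)) (x XOR a) (y XOR a)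
      = (\<Prod>i<n. sgnb (B i \<and> bit a i)) * tensor n (\<lambda>i. pauli_xz (A i) (B i)) x y"
    by (simp only: tensor_def bit_xor_iff pauli_xz_flip prod.distrib mult_1 complex_cnj_one) simp
  moreover have "(\<Prod>i<n. sgnb (B i \<and> bit a i)) \<in> phases"
    by (intro prod_in_phases sgnb_in_phases)
  ultimately show "\<exists>\<sigma>\<in>phases. \<exists>A' B'. \<forall>x<2^n. \<forall>y<2^n.
      1 * cnj 1 * tensor n (\<lambda>i. pauli_xz (A i) (B i)) (x XOR a) (y XOR a)
        = \<sigma> * tensor n (\<lambda>i. pauli_xz (A' i) (B' i)) x y"
    by blast
qed

text \<open>\<open>cnot_gate j m\<close> is the product of the CNOTs with control \<open>j\<close> and targets the bits of \<open>m\<close>.\<close>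

definition cnot_perm :: "nat \<Rightarrow> nat \<Rightarrow> nat \<Rightarrow> nat" where
  "cnot_perm j m x = (if bit x j then x XOR m else x)"

definition cnot_gate :: "nat \<Rightarrow> nat \<Rightarrow> nat \<Rightarrow> nat \<Rightarrow> complex" where
  "cnot_gate j m = monomial_mat (cnot_perm j m) (\<lambda>_. 1)"

lemma bit_cnot_perm: "\<not> bit m j \<Longrightarrow> bit (cnot_perm j m x) i = (bit x i \<noteq> (bit x j \<and> bit m i))"
  by (auto simp: cnot_perm_def bit_xor_iff)

lemma cnot_perm_less: "x < 2^n \<Longrightarrow> m < 2^n \<Longrightarrow> cnot_perm j m x < 2^n"
  by (simp add: cnot_perm_def xor_less_exp)

lemma cnot_perm_cnot_perm: "\<not> bit m j \<Longrightarrow> cnot_perm j m (cnot_perm j m x) = x"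
  by (auto simp: cnot_perm_def bit_xor_iff xor.assoc)

lemma cnot_pauli_support_iff:
  fixes A X Y M :: "nat \<Rightarrow> bool"
  assumes j: "j < n" and Mj: "\<not> M j"
  shows "(\<forall>i<n. (Y i \<noteq> (Y j \<and> M i)) = ((X i \<noteq> (X j \<and> M i)) \<noteq> A i))
     \<longleftrightarrow> (\<forall>i<n. Y i = (X i \<noteq> (A i \<noteq> (A j \<and> M i))))"
proof
  assume L: "\<forall>i<n. (Y i \<noteq> (Y j \<and> M i)) = ((X i \<noteq> (X j \<and> M i)) \<noteq> A i)"
  then have "Y j = (X j \<noteq> A j)" using j Mj by auto
  then show "\<forall>i<n. Y i = (X i \<noteq> (A i \<noteq> (A j \<and> M i)))" using L by auto
next
  assume R: "\<forall>i<n. Y i = (X i \<noteq> (A i \<noteq> (A j \<and> M i)))"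
  then have "Y j = (X j \<noteq> A j)" using j Mj by auto
  then show "\<forall>i<n. (Y i \<noteq> (Y j \<and> M i)) = ((X i \<noteq> (X j \<and> M i)) \<noteq> A i)" using R by auto
qed

lemma cnot_pauli_sign:
  fixes B Y M :: "nat \<Rightarrow> bool"
  assumes j: "j < n"
  defines "par \<equiv> (\<Prod>i<n. sgnb (B i \<and> M i)) = -1"
  shows "(\<Prod>i<n. sgnb (B i \<and> (Y i \<noteq> (Y j \<and> M i)))) = (\<Prod>i<n. sgnb ((B i \<noteq> (i = j \<and> par)) \<and> Y i))"
proof -
  have "(\<Prod>i<n. sgnb (B i \<and> (Y i \<noteq> (Y j \<and> M i)))) = (\<Prod>i<n. sgnb (B i \<and> Y i) * sgnb (Y j \<and> (B i \<and> M i)))"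
    by (rule prod.cong) (auto simp: sgnb_def)
  also have "\<dots> = (\<Prod>i<n. sgnb (B i \<and> Y i)) * (\<Prod>i<n. sgnb (Y j \<and> (B i \<and> M i)))"
    by (rule prod.distrib)
  also have "(\<Prod>i<n. sgnb (Y j \<and> (B i \<and> M i))) = sgnb (par \<and> Y j)"
    using prod_sgnb_eq_sgnb[of "\<lambda>i. B i \<and> M i" n] unfolding par_def by (cases "Y j") auto
  also have "\<dots> = (\<Prod>i<n. sgnb ((i = j \<and> par) \<and> Y i))"
    using prod_sgnb_single[OF j] by simp
  finally show ?thesis by (simp only: prod_sgnb_xor)
qed

lemma pauli_xz_cnot_conj:
  fixes A B X Y M :: "nat \<Rightarrow> bool"
  assumes j: "j < n" and Mj: "\<not> M j"
  defines "par \<equiv> (\<Prod>i<n. sgnb (B i \<and> M i)) = -1"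
  shows "(\<Prod>i<n. pauli_xz (A i) (B i) (X i \<noteq> (X j \<and> M i)) (Y i \<noteq> (Y j \<and> M i)))
       = (\<Prod>i<n. pauli_xz (A i \<noteq> (A j \<and> M i)) (B i \<noteq> (i = j \<and> par)) (X i) (Y i))"
  unfolding pauli_xz_def prod_if_else_zero
  by (simp only: cnot_pauli_support_iff[where M = M, OF j Mj] cnot_pauli_sign[OF j, of B Y M, folded par_def])

lemma cnot_gate_clifford:
  assumes j: "j < n" and m: "m < 2^n" and mj: "\<not> bit m j"
  shows "cnot_gate j m \<in> clifford n"
  unfolding cnot_gate_def
proof (rule monomial_mat_clifford)
  show "\<forall>x<2^n. cnot_perm j m x < (2::nat)^n" using m cnot_perm_less by blast
  show "\<forall>x<2^n. cnot_perm j m (cnot_perm j m x) = x" using mj cnot_perm_cnot_perm by blast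
  show "\<forall>x::nat. (1::complex) * cnj 1 = 1" by simp
  fix A B :: "nat \<Rightarrow> bool"
  let ?par = "(\<Prod>i<n. sgnb (B i \<and> bit m i)) = -1"
  have H: "\<forall>x<2^n. \<forall>y<2^n. 1 * cnj 1 * tensor n (\<lambda>i. pauli_xz (A i) (B i)) (cnot_perm j m x) (cnot_perm j m y)
      = 1 * tensor n (\<lambda>i. pauli_xz (A i \<noteq> (A j \<and> bit m i)) (B i \<noteq> (i = j \<and> ?par))) x y"
    unfolding tensor_def bit_cnot_perm[OF mj]
    using pauli_xz_cnot_conj[OF j, of "\<lambda>i. bit m i"] mj by simp
  show "\<exists>\<sigma>\<in>phases. \<exists>A' B'. \<forall>x<2^n. \<forall>y<2^n.
      1 * cnj 1 * tensor n (\<lambda>i. pauli_xz (A i) (B i)) (cnot_perm j m x) (cnot_perm j m y)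
        = \<sigma> * tensor n (\<lambda>i. pauli_xz (A' i) (B' i)) x y"
    by (rule bexI[OF _ one_in_phases], intro exI, rule H)
qed

text \<open>\<open>cz_gate j l\<close> is \<open>CZ\<close> on qubits \<open>j, l\<close> conjugated by \<open>X\<close> on both.\<close>

definition cz_gate :: "nat \<Rightarrow> nat \<Rightarrow> nat \<Rightarrow> nat \<Rightarrow> complex" where
  "cz_gate j l = monomial_mat (\<lambda>x. x) (\<lambda>x. sgnb (\<not> bit x j \<and> \<not> bit x l))"

lemma pauli_xz_cz_conj:
  fixes A B X Y :: "nat \<Rightarrow> bool"
  assumes j: "j < n" and l: "l < n" and jl: "j \<noteq> l"
  shows "sgnb (\<not> X j \<and> \<not> X l) * sgnb (\<not> Y j \<and> \<not> Y l) * (\<Prod>i<n. pauli_xz (A i) (B i) (X i) (Y i))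
       = sgnb (A j \<or> A l) * (\<Prod>i<n. pauli_xz (A i) ((B i \<noteq> (i = j \<and> A l)) \<noteq> (i = l \<and> A j)) (X i) (Y i))"
proof (cases "\<forall>i<n. Y i = (X i \<noteq> A i)")
  case True
  have Yj: "Y j = (X j \<noteq> A j)" and Yl: "Y l = (X l \<noteq> A l)" using True j l by auto
  have "sgnb (\<not> X j \<and> \<not> X l) * sgnb (\<not> Y j \<and> \<not> Y l) = sgnb (A j \<or> A l) * (sgnb (A l \<and> Y j) * sgnb (A j \<and> Y l))"
    unfolding Yj Yl by (cases "X j"; cases "X l"; cases "A j"; cases "A l") (auto simp: sgnb_def)
  moreover have "(\<Prod>i<n. sgnb (((B i \<noteq> (i = j \<and> A l)) \<noteq> (i = l \<and> A j)) \<and> Y i))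
      = (\<Prod>i<n. sgnb (B i \<and> Y i)) * sgnb (A l \<and> Y j) * sgnb (A j \<and> Y l)"
    by (simp only: prod_sgnb_xor prod_sgnb_single[OF j] prod_sgnb_single[OF l])
  ultimately show ?thesis
    by (simp only: pauli_xz_def prod_if_else_zero if_P[OF True] mult_ac)
next
  case False
  then show ?thesis by (simp only: pauli_xz_def prod_if_else_zero if_False mult_zero_right)
qed

lemma cz_gate_clifford:
  assumes j: "j < n" and l: "l < n" and jl: "j \<noteq> l"
  shows "cz_gate j l \<in> clifford n"
  unfolding cz_gate_def
proof (rule monomial_mat_clifford)
  show "\<forall>x<2^n. x < (2::nat)^n" by simp
  show "\<forall>x<2^n. x = (x::nat)" by simp
  show "\<forall>x. sgnb (\<not> bit x j \<and> \<not> bit x l) * cnj (sgnb (\<not> bit x j \<and> \<not> bit x l)) = 1" by simp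
  fix A B :: "nat \<Rightarrow> bool"
  have H: "\<forall>x<2^n. \<forall>y<2^n. sgnb (\<not> bit x j \<and> \<not> bit x l) * cnj (sgnb (\<not> bit y j \<and> \<not> bit y l))
        * tensor n (\<lambda>i. pauli_xz (A i) (B i)) x y
      = sgnb (A j \<or> A l) * tensor n (\<lambda>i. pauli_xz (A i) ((B i \<noteq> (i = j \<and> A l)) \<noteq> (i = l \<and> A j))) x y"
    unfolding tensor_def sgnb_cnj using pauli_xz_cz_conj[OF j l jl] by blast
  show "\<exists>\<sigma>\<in>phases. \<exists>A' B'. \<forall>x<2^n. \<forall>y<2^n.
      sgnb (\<not> bit x j \<and> \<not> bit x l) * cnj (sgnb (\<not> bit y j \<and> \<not> bit y l)) * tensor n (\<lambda>i. pauli_xz (A i) (B i)) x y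
        = \<sigma> * tensor n (\<lambda>i. pauli_xz (A' i) (B' i)) x y"
    by (rule bexI[OF _ sgnb_in_phases], intro exI, rule H)
qed

definition inv_sqrt2 :: complex where
  "inv_sqrt2 = complex_of_real (1 / sqrt 2)"

lemma inv_sqrt2_mult_self: "inv_sqrt2 * inv_sqrt2 = 1/2"
proof -
  have "(1 / sqrt 2) * (1 / sqrt 2) = (1/2::real)" by (simp add: field_simps)
  then show ?thesis unfolding inv_sqrt2_def of_real_mult[symmetric] by simp
qed

lemma inv_sqrt2_mult_self': "inv_sqrt2 * (inv_sqrt2 * c) = c / 2"
  using inv_sqrt2_mult_self by (metis mult.assoc mult.commute times_divide_eq_right mult_1_right)

lemma cnj_inv_sqrt2 [simp]: "cnj inv_sqrt2 = inv_sqrt2"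
  by (simp add: inv_sqrt2_def)

definition qhadamard :: "bool \<Rightarrow> bool \<Rightarrow> complex" where
  "qhadamard = (\<lambda>p q. sgnb (p \<and> q) * inv_sqrt2)"

definition hadamard_gate :: "nat \<Rightarrow> nat set \<Rightarrow> nat \<Rightarrow> nat \<Rightarrow> complex" where
  "hadamard_gate n S = tensor n (\<lambda>i. if i \<in> S then qhadamard else qid)"

lemma hadamard_gate_clifford: "hadamard_gate n S \<in> clifford n"
  unfolding hadamard_gate_def
proof (rule tensor_clifford)
  fix i
  show "qmul (if i \<in> S then qhadamard else qid) (qadj (if i \<in> S then qhadamard else qid)) = qid"
    by (auto simp: fun_eq_iff qmul_def qadj_def qhadamard_def qid_def sgnb_def inv_sqrt2_mult_self)
next
  fix i a b
  have "qmul (qmul qhadamard (pauli_xz a b)) (qadj qhadamard) = scale_mat (sgnb (a \<and> b)) (pauli_xz b a)"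
    by (cases a; cases b) (auto simp: fun_eq_iff qmul_def qadj_def qhadamard_def scale_mat_def pauli_xz_def
        sgnb_def inv_sqrt2_mult_self inv_sqrt2_mult_self' algebra_simps)
  moreover have "qmul (qmul qid (pauli_xz a b)) (qadj qid) = scale_mat 1 (pauli_xz a b)"
    by (auto simp: fun_eq_iff qmul_def qadj_def qid_def scale_mat_def)
  ultimately show "\<exists>\<sigma>\<in>phases. \<exists>a' b'. qmul (qmul (if i \<in> S then qhadamard else qid) (pauli_xz a b))
      (qadj (if i \<in> S then qhadamard else qid)) = scale_mat \<sigma> (pauli_xz a' b')"
    using sgnb_in_phases one_in_phases by (cases "i \<in> S") auto
qed

lemma hadamard_gate_col0:
  "hadamard_gate n S z 0 = (if \<forall>i<n. i \<notin> S \<longrightarrow> \<not> bit z i then inv_sqrt2 ^ card (S \<inter> {..<n}) else 0)"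
proof -
  have "hadamard_gate n S z 0 = (\<Prod>i<n. if i \<notin> S \<longrightarrow> \<not> bit z i then (if i \<in> S then inv_sqrt2 else 1) else 0)"
    unfolding hadamard_gate_def tensor_def by (rule prod.cong) (auto simp: qhadamard_def qid_def)
  also have "\<dots> = (if \<forall>i<n. i \<notin> S \<longrightarrow> \<not> bit z i then (\<Prod>i<n. if i \<in> S then inv_sqrt2 else 1) else 0)"
    by (rule prod_if_else_zero)
  also have "(\<Prod>i<n. if i \<in> S then inv_sqrt2 else 1) = inv_sqrt2 ^ card (S \<inter> {..<n})"
    by (simp add: prod.If_cases Int_commute)
  finally show ?thesis .
qed

section \<open>Stabilizer states\<close>

lemma stab_state_ket: "p < 2^n \<Longrightarrow> stab_state n (ket p)"
proof (rule stab_stateI[OF shift_gate_clifford])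
  fix x :: nat assume "x < 2^n"
  show "ket p x = shift_gate p x 0"
    by (auto simp: ket_def shift_gate_def monomial_mat_def xor_eq_0_iff)
qed

lemma stab_state_pair:
  assumes p: "p < 2^n" and q: "q < 2^n" and pq: "p \<noteq> q"
  shows "stab_state n (\<lambda>x. inv_sqrt2 * (ket p x + ket q x))"
proof -
  obtain j where bj: "bit (p XOR q) j"
    using pq by (metis bit_eqI bit_xor_iff)
  have j: "j < n" using bj xor_less_exp[OF p q] less_exp_not_bit not_less by metis
  define m where "m = (p XOR q) XOR 2^j"
  have m: "m < 2^n" unfolding m_def using j p q by (intro xor_less_exp) auto
  have bm: "bit m i = ((bit p i \<noteq> bit q i) \<and> i \<noteq> j)" for i
    unfolding m_def using bj by (auto simp: bit_xor_iff bit_exp_iff)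
  then have mj: "\<not> bit m j" by simp
  let ?N = "2^n::nat"
  define U where "U = mmul ?N (shift_gate p) (mmul ?N (cnot_gate j m) (hadamard_gate n {j}))"
  have U: "U \<in> clifford n"
    unfolding U_def by (intro clifford_mmul shift_gate_clifford cnot_gate_clifford hadamard_gate_clifford p j m mj)
  show ?thesis
  proof (rule stab_stateI[OF U])
    fix x :: nat assume x: "x < 2^n"
    have xp: "x XOR p < 2^n" using x p xor_less_exp by blast
    have "U x 0 = hadamard_gate n {j} (cnot_perm j m (x XOR p)) 0"
      unfolding U_def shift_gate_def cnot_gate_def
      using x xp cnot_perm_less[OF xp m] by (simp add: mmul_monomial_mat)
    also have "\<dots> = (if \<forall>i<n. i \<noteq> j \<longrightarrow> \<not> bit (cnot_perm j m (x XOR p)) i then inv_sqrt2 else 0)"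
      using j by (auto simp: hadamard_gate_col0)
    also have "(\<forall>i<n. i \<noteq> j \<longrightarrow> \<not> bit (cnot_perm j m (x XOR p)) i) \<longleftrightarrow> (x = p \<or> x = q)"
    proof
      assume "\<forall>i<n. i \<noteq> j \<longrightarrow> \<not> bit (cnot_perm j m (x XOR p)) i"
      then have H: "\<And>i. i < n \<Longrightarrow> i \<noteq> j \<Longrightarrow> (bit x i \<noteq> bit p i) = ((bit x j \<noteq> bit p j) \<and> (bit p i \<noteq> bit q i))"
        by (auto simp: bit_cnot_perm[OF mj] bit_xor_iff bm)
      have "bit p j \<noteq> bit q j" using bj by (simp add: bit_xor_iff)
      then show "x = p \<or> x = q"
        using eq_if_low_bits_eq[OF x p] eq_if_low_bits_eq[OF x q] H by (cases "bit x j = bit p j") auto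
    next
      assume "x = p \<or> x = q"
      then show "\<forall>i<n. i \<noteq> j \<longrightarrow> \<not> bit (cnot_perm j m (x XOR p)) i"
        using bj by (auto simp: bit_cnot_perm[OF mj] bit_xor_iff bm)
    qed
    finally show "inv_sqrt2 * (ket p x + ket q x) = U x 0"
      using pq by (auto simp: ket_def)
  qed
qed

text \<open>The circuit preparing the uniform superposition over the plane \<open>{0, u, v, u XOR v}\<close>: Hadamards
  on a bit \<open>j\<close> of \<open>u\<close> outside \<open>v\<close> and a bit \<open>l\<close> of \<open>v\<close> outside \<open>u\<close>, then CNOTs copying them to the
  remaining bits of \<open>u\<close> and \<open>v\<close>.\<close>

lemma plane_circuit_bits:
  fixes u v j l n x :: nat
  assumes u: "u < 2^n" and v: "v < 2^n" and x: "x < 2^n"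
    and uj: "bit u j" and vj: "\<not> bit v j" and vl: "bit v l" and ul: "\<not> bit u l"
  defines "y \<equiv> cnot_perm j (u XOR 2^j) (cnot_perm l (v XOR 2^l) x)"
  shows "bit y j = bit x j" and "bit y l = bit x l"
    and "(\<forall>i<n. i \<notin> {j, l} \<longrightarrow> \<not> bit y i) \<longleftrightarrow> (x = 0 \<or> x = u \<or> x = v \<or> x = u XOR v)"
proof -
  have jl: "j \<noteq> l" using uj ul by auto
  have b1: "bit (u XOR 2^j) i = (bit u i \<and> i \<noteq> j)" for i using uj by (auto simp: bit_xor_iff bit_exp_iff)
  have b2: "bit (v XOR 2^l) i = (bit v i \<and> i \<noteq> l)" for i using vl by (auto simp: bit_xor_iff bit_exp_iff)
  have by_bits: "bit y i = ((bit x i \<noteq> (bit x l \<and> bit v i \<and> i \<noteq> l)) \<noteq> (bit x j \<and> bit u i \<and> i \<noteq> j))" for i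
    unfolding y_def using vj jl b1 b2 by (simp add: bit_cnot_perm)
  show "bit y j = bit x j" using by_bits vj by simp
  show "bit y l = bit x l" using by_bits ul by simp
  let ?G = "\<forall>i<n. bit x i = ((bit x l \<and> bit v i) \<noteq> (bit x j \<and> bit u i))"
  have "(\<forall>i<n. i \<notin> {j, l} \<longrightarrow> \<not> bit y i) \<longleftrightarrow> ?G"
    using by_bits uj vj vl ul jl by (metis insertCI singletonD insertE)
  also have "?G \<longleftrightarrow> (x = 0 \<or> x = u \<or> x = v \<or> x = u XOR v)"
  proof
    assume G: ?G
    consider "\<not> bit x j" "\<not> bit x l" | "bit x j" "\<not> bit x l" | "\<not> bit x j" "bit x l" | "bit x j" "bit x l"
      by blast
    then show "x = 0 \<or> x = u \<or> x = v \<or> x = u XOR v"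
    proof cases
      case 1 then have "x = 0" using G by (intro eq_if_low_bits_eq[OF x, of 0]) auto
      then show ?thesis by simp
    next
      case 2 then have "x = u" using G by (intro eq_if_low_bits_eq[OF x u]) auto
      then show ?thesis by simp
    next
      case 3 then have "x = v" using G by (intro eq_if_low_bits_eq[OF x v]) auto
      then show ?thesis by simp
    next
      case 4 then have "x = u XOR v"
        using G by (intro eq_if_low_bits_eq[OF x xor_less_exp[OF u v]]) (auto simp: bit_xor_iff)
      then show ?thesis by simp
    qed
  next
    assume "x = 0 \<or> x = u \<or> x = v \<or> x = u XOR v"
    then show ?G using uj vj vl ul by (auto simp: bit_xor_iff)
  qed
  finally show "(\<forall>i<n. i \<notin> {j, l} \<longrightarrow> \<not> bit y i) \<longleftrightarrow> (x = 0 \<or> x = u \<or> x = v \<or> x = u XOR v)" .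
qed

lemma stab_state_plane:
  fixes u v j l n :: nat
  assumes u: "u < 2^n" and v: "v < 2^n" and j: "j < n" and l: "l < n"
    and uj: "bit u j" and vj: "\<not> bit v j" and vl: "bit v l" and ul: "\<not> bit u l"
  shows "stab_state n (\<lambda>x. if x = 0 \<or> x = u \<or> x = v \<or> x = u XOR v then 1/2 else 0)"
    and "stab_state n (\<lambda>x. if x = 0 then -1/2 else if x = u \<or> x = v \<or> x = u XOR v then 1/2 else 0)"
proof -
  have jl: "j \<noteq> l" using uj ul by auto
  define m1 where "m1 = u XOR 2^j"
  define m2 where "m2 = v XOR 2^l"
  have m1: "m1 < 2^n" unfolding m1_def using u j by (intro xor_less_exp) auto
  have m2: "m2 < 2^n" unfolding m2_def using v l by (intro xor_less_exp) auto
  have m1j: "\<not> bit m1 j" unfolding m1_def using uj by (auto simp: bit_xor_iff bit_exp_iff)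
  have m2l: "\<not> bit m2 l" unfolding m2_def using vl by (auto simp: bit_xor_iff bit_exp_iff)
  let ?N = "2^n::nat"
  have card2: "card ({j, l} \<inter> {..<n}) = 2" using j l jl by auto
  have half: "inv_sqrt2 ^ 2 = 1/2" using inv_sqrt2_mult_self by (simp add: power2_eq_square)
  note bits = plane_circuit_bits[OF u v _ uj vj vl ul, folded m1_def m2_def]
  have perm_less: "cnot_perm l m2 x < 2^n" "cnot_perm j m1 (cnot_perm l m2 x) < 2^n" if "x < 2^n" for x
    using that by (simp_all add: cnot_perm_less m1 m2)
  define U1 where "U1 = mmul ?N (cnot_gate l m2) (mmul ?N (cnot_gate j m1) (hadamard_gate n {j, l}))"
  have U1: "U1 \<in> clifford n"
    unfolding U1_def by (intro clifford_mmul cnot_gate_clifford hadamard_gate_clifford j l m1 m2 m1j m2l)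
  show "stab_state n (\<lambda>x. if x = 0 \<or> x = u \<or> x = v \<or> x = u XOR v then 1/2 else 0)"
  proof (rule stab_stateI[OF U1])
    fix x :: nat assume x: "x < 2^n"
    have "U1 x 0 = hadamard_gate n {j, l} (cnot_perm j m1 (cnot_perm l m2 x)) 0"
      unfolding U1_def cnot_gate_def using x perm_less[OF x] by (simp add: mmul_monomial_mat)
    then show "(if x = 0 \<or> x = u \<or> x = v \<or> x = u XOR v then 1/2 else 0) = U1 x 0"
      unfolding hadamard_gate_col0 card2 half using bits(3)[OF x] by simp
  qed
  text \<open>The extra \<open>cz_gate\<close> flips the sign of the amplitude at \<open>0\<close>.\<close>
  define U2 where "U2 = mmul ?N (cnot_gate l m2) (mmul ?N (cnot_gate j m1) (mmul ?N (cz_gate j l) (hadamard_gate n {j, l})))"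
  have U2: "U2 \<in> clifford n"
    unfolding U2_def
    by (intro clifford_mmul cnot_gate_clifford hadamard_gate_clifford cz_gate_clifford j l jl m1 m2 m1j m2l)
  show "stab_state n (\<lambda>x. if x = 0 then -1/2 else if x = u \<or> x = v \<or> x = u XOR v then 1/2 else 0)"
  proof (rule stab_stateI[OF U2])
    fix x :: nat assume x: "x < 2^n"
    have "U2 x 0 = sgnb (\<not> bit x j \<and> \<not> bit x l) * hadamard_gate n {j, l} (cnot_perm j m1 (cnot_perm l m2 x)) 0"
      unfolding U2_def cnot_gate_def cz_gate_def using x perm_less[OF x] bits(1,2)[OF x]
      by (simp add: mmul_monomial_mat)
    then show "(if x = 0 then -1/2 else if x = u \<or> x = v \<or> x = u XOR v then 1/2 else 0) = U2 x 0"
      unfolding hadamard_gate_col0 card2 half using bits(3)[OF x] uj vl ul vj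
      by (auto simp: sgnb_def bit_xor_iff)
  qed
qed

lemma stab_state_norm:
  assumes "stab_state n \<phi>"
  shows "(\<Sum>x<2^n. \<phi> x * cnj (\<phi> x)) = 1"
proof -
  obtain U where U: "U \<in> clifford n" and \<phi>: "\<forall>x<2^n. \<phi> x = U x 0"
    using assms unfolding stab_state_def by blast
  have "mat_eq (2^n) (mmul (2^n) (adj U) U) idm"
    using U unitary_left_inverse by (auto simp: clifford_def)
  then have "(\<Sum>x<2^n. cnj (U x 0) * U x 0) = 1"
    by (simp add: mat_eq_def idm_def mmul_def adj_def)
  then show ?thesis using \<phi> by (simp add: mult.commute)
qed

definition z_string :: "nat \<Rightarrow> nat \<Rightarrow> nat \<Rightarrow> nat \<Rightarrow> complex" where
  "z_string n b = tensor n (\<lambda>i. pauli_xz False (bit b i))"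

lemma z_string_in_pauli_group: "z_string n b \<in> pauli_group n"
proof -
  have "z_string n b = pauli_string n 1 (\<lambda>_. False) (\<lambda>i. bit b i)"
    by (simp add: z_string_def pauli_string_def scale_mat_1)
  then show ?thesis using pauli_string_in_pauli_group[OF one_in_phases] by simp
qed

lemma sum_z_strings:
  assumes "m < 2^n" "l < 2^n"
  shows "(\<Sum>b<2^n. z_string n b m l) = (if m = 0 \<and> l = 0 then 2^n else 0)"
proof -
  have "(\<Sum>b::nat<2^n. z_string n b m l)
      = (\<Prod>i<n. pauli_xz False False (bit m i) (bit l i) + pauli_xz False True (bit m i) (bit l i))"
    unfolding z_string_def tensor_def by (rule sum_bitstrings_prod)
  also have "\<dots> = (\<Prod>i<n. if \<not> bit m i \<and> \<not> bit l i then 2 else 0)"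
    by (rule prod.cong) (auto simp: pauli_xz_def sgnb_def)
  also have "\<dots> = (if \<forall>i<n. \<not> bit m i \<and> \<not> bit l i then 2^n else 0)"
    by (simp add: prod_if_else_zero)
  also have "(\<forall>i<n. \<not> bit m i \<and> \<not> bit l i) \<longleftrightarrow> m = 0 \<and> l = 0"
    using eq_if_low_bits_eq[OF assms(1), of 0] eq_if_low_bits_eq[OF assms(2), of 0] by auto
  finally show ?thesis .
qed

lemma z_string_col0: "l < 2^n \<Longrightarrow> z_string n b l 0 = (if l = 0 then 1 else 0)"
proof -
  assume l: "l < 2^n"
  have "z_string n b l 0 = (\<Prod>i<n. if \<not> bit l i then 1 else 0)"
    unfolding z_string_def tensor_def by (rule prod.cong) (auto simp: pauli_xz_def sgnb_def)
  also have "\<dots> = (if \<forall>i<n. \<not> bit l i then 1 else 0)" by (simp add: prod_if_else_zero)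
  finally show ?thesis using eq_if_low_bits_eq[OF l, of 0] by auto
qed

text \<open>Averaging over the stabilizer group \<open>U Z\<^sup>b U\<^sup>\<dagger>\<close> of \<open>U|0\<rangle>\<close> yields its projector.\<close>

lemma sum_conj_z_strings:
  assumes x: "x < 2^n" and y: "y < 2^n"
  shows "(\<Sum>b<2^n. mmul (2^n) (mmul (2^n) U (z_string n b)) (adj U) x y) = 2^n * (U x 0 * cnj (U y 0))"
proof -
  let ?N = "2^n::nat"
  have "(\<Sum>b<?N. mmul ?N (mmul ?N U (z_string n b)) (adj U) x y)
      = (\<Sum>b<?N. \<Sum>l<?N. \<Sum>m<?N. U x m * z_string n b m l * cnj (U y l))"
    by (simp add: mmul_def adj_def sum_distrib_right)
  also have "\<dots> = (\<Sum>l<?N. \<Sum>m<?N. \<Sum>b<?N. U x m * z_string n b m l * cnj (U y l))"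
    by (subst sum.swap) (rule sum.cong[OF refl], rule sum.swap)
  also have "\<dots> = (\<Sum>l<?N. \<Sum>m<?N. U x m * (\<Sum>b<?N. z_string n b m l) * cnj (U y l))"
    by (simp add: sum_distrib_left sum_distrib_right)
  also have "\<dots> = (\<Sum>l<?N. \<Sum>m<?N. if m = 0 \<and> l = 0 then U x 0 * 2^n * cnj (U y 0) else 0)"
    by (intro sum.cong refl) (simp add: sum_z_strings)
  also have "\<dots> = (\<Sum>l<?N. if l = 0 then (\<Sum>m<?N. if m = 0 then U x 0 * 2^n * cnj (U y 0) else 0) else 0)"
    by (rule sum.cong) auto
  also have "\<dots> = 2^n * (U x 0 * cnj (U y 0))"
    by simp
  finally show ?thesis .
qed

lemma conj_z_string_fixes_col0:
  assumes U: "U \<in> clifford n" and x: "x < 2^n"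
  shows "(\<Sum>y<2^n. mmul (2^n) (mmul (2^n) U (z_string n b)) (adj U) x y * U y 0) = U x 0"
proof -
  let ?N = "2^n::nat"
  have "mat_eq ?N (mmul ?N (adj U) U) idm"
    using U unitary_left_inverse by (simp add: clifford_def)
  have "(\<Sum>y<?N. mmul ?N (mmul ?N U (z_string n b)) (adj U) x y * U y 0)
      = mmul ?N (mmul ?N (mmul ?N U (z_string n b)) (adj U)) U x 0"
    by (simp add: mmul_def[of _ _ U])
  also have "\<dots> = mmul ?N (mmul ?N U (z_string n b)) (mmul ?N (adj U) U) x 0"
    by (simp add: mmul_assoc)
  also have "\<dots> = mmul ?N (mmul ?N U (z_string n b)) idm x 0"
    using \<open>mat_eq ?N (mmul ?N (adj U) U) idm\<close> x by (intro mmul_cong_right) auto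
  also have "\<dots> = mmul ?N U (z_string n b) x 0" by (simp add: mmul_idm_right)
  also have "\<dots> = (\<Sum>l<?N. if l = 0 then U x l else 0)"
    unfolding mmul_def by (rule sum.cong) (auto simp: z_string_col0)
  finally show ?thesis by simp
qed

lemma tensor_pauli_xz_mult_vec:
  assumes x: "x < 2^n" and d: "d < 2^n" and dA: "\<And>i. i < n \<Longrightarrow> bit d i = A i"
  shows "(\<Sum>y<2^n. tensor n (\<lambda>i. pauli_xz (A i) (B i)) x y * f y)
    = (\<Prod>i<n. sgnb (B i \<and> bit (x XOR d) i)) * f (x XOR d)"
proof -
  have xd: "x XOR d < 2^n" using xor_less_exp[OF x d] .
  have "tensor n (\<lambda>i. pauli_xz (A i) (B i)) x y = 0" if "y < 2^n" "y \<noteq> x XOR d" for y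
    using that eq_if_low_bits_eq[OF that(1) xd] dA by (auto simp: tensor_pauli_xz_eq bit_xor_iff)
  then have "(\<Sum>y<2^n. tensor n (\<lambda>i. pauli_xz (A i) (B i)) x y * f y)
      = (\<Sum>y<2^n. if y = x XOR d then tensor n (\<lambda>i. pauli_xz (A i) (B i)) x y * f y else 0)"
    by (intro sum.cong) auto
  also have "\<dots> = tensor n (\<lambda>i. pauli_xz (A i) (B i)) x (x XOR d) * f (x XOR d)"
    using xd by simp
  finally show ?thesis
    using dA by (simp add: tensor_pauli_xz_eq bit_xor_iff)
qed

text \<open>If \<open>\<phi> a\<close> and \<open>\<phi> b\<close> are nonzero, some stabilizer of \<open>\<phi>\<close> has a nonzero \<open>(a, b)\<close> entry, so it
  is an \<open>X\<close>-part \<open>a XOR b\<close> Pauli; applying it shows that \<open>|\<phi>|\<close> is invariant under \<open>x \<mapsto> x XOR a XOR b\<close>.\<close>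

lemma stab_state_norm_xor_invariant:
  assumes st: "stab_state n \<phi>" and a: "a < 2^n" and b: "b < 2^n" and ab: "\<phi> a * cnj (\<phi> b) \<noteq> 0"
    and x: "x < 2^n"
  shows "cmod (\<phi> x) = cmod (\<phi> (x XOR (a XOR b)))"
proof -
  let ?N = "2^n::nat"
  obtain U where U: "U \<in> clifford n" and \<phi>: "\<forall>x<2^n. \<phi> x = U x 0"
    using st unfolding stab_state_def by blast
  have "(\<Sum>b'<?N. mmul ?N (mmul ?N U (z_string n b')) (adj U) a b) \<noteq> 0"
    using sum_conj_z_strings[OF a b, of U] ab \<phi> a b by simp
  then obtain b0 where Qab: "mmul ?N (mmul ?N U (z_string n b0)) (adj U) a b \<noteq> 0"
    by (meson sum.neutral)
  define Q where "Q = mmul ?N (mmul ?N U (z_string n b0)) (adj U)"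
  have "Q \<in> pauli_group n"
    unfolding Q_def using U z_string_in_pauli_group by (simp add: clifford_def)
  then obtain c A B where c: "c \<in> phases" and QP: "mat_eq ?N Q (pauli_string n c A B)"
    unfolding pauli_group_iff by blast
  have "tensor n (\<lambda>i. pauli_xz (A i) (B i)) a b \<noteq> 0"
    using Qab QP a b by (auto simp: Q_def mat_eq_def pauli_string_def scale_mat_def)
  then have dA: "bit (a XOR b) i = A i" if "i < n" for i
    using that by (auto simp: tensor_pauli_xz_eq bit_xor_iff split: if_splits)
  have "\<phi> x = (\<Sum>y<?N. Q x y * \<phi> y)"
    using conj_z_string_fixes_col0[OF U x] \<phi> x by (simp add: Q_def)
  also have "\<dots> = c * (\<Sum>y<?N. tensor n (\<lambda>i. pauli_xz (A i) (B i)) x y * \<phi> y)"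
    using QP x by (simp add: mat_eq_def pauli_string_def scale_mat_def sum_distrib_left mult.assoc)
  also have "\<dots> = c * (\<Prod>i<n. sgnb (B i \<and> bit (x XOR (a XOR b)) i)) * \<phi> (x XOR (a XOR b))"
    using tensor_pauli_xz_mult_vec[OF x xor_less_exp[OF a b] dA] by simp
  finally show ?thesis
    using norm_phases[OF c] by (simp add: norm_mult norm_prod_sgnb)
qed

section \<open>Stabilizer cones and the stabilizer polytope\<close>

definition stab_term :: "nat \<Rightarrow> nat set \<Rightarrow> (nat \<Rightarrow> nat \<Rightarrow> complex) \<Rightarrow> bool" where
  "stab_term n W P \<longleftrightarrow> (\<exists>w \<phi>. w \<ge> 0 \<and> stab_state n \<phi> \<and> (\<forall>x<2^n. \<phi> x \<noteq> 0 \<longrightarrow> x \<in> W)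
      \<and> mat_eq (2^n) P (\<lambda>x y. complex_of_real w * proj \<phi> x y))"

lemma stab_termI:
  "w \<ge> 0 \<Longrightarrow> stab_state n \<phi> \<Longrightarrow> stab_term n UNIV (\<lambda>x y. complex_of_real w * proj \<phi> x y)"
  unfolding stab_term_def using mat_eq_refl by blast

lemma stab_term_ket:
  assumes p: "p < 2^n" "p \<in> W" and \<phi>: "\<And>x. x < 2^n \<Longrightarrow> \<phi> x = complex_of_real r * ket p x"
  shows "stab_term n W (proj \<phi>)"
  unfolding stab_term_def
proof (intro exI conjI)
  show "0 \<le> r\<^sup>2" by simp
  show "stab_state n (ket p)" using stab_state_ket[OF p(1)] .
  show "\<forall>x<2^n. ket p x \<noteq> 0 \<longrightarrow> x \<in> W" using p by (simp add: ket_def)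
  show "mat_eq (2^n) (proj \<phi>) (\<lambda>x y. complex_of_real (r\<^sup>2) * proj (ket p) x y)"
    using \<phi> by (simp add: mat_eq_def proj_def ket_def power2_eq_square)
qed

lemma stab_term_pair:
  assumes p: "p < 2^n" "p \<in> W" and q: "q < 2^n" "q \<in> W" and pq: "p \<noteq> q"
    and \<phi>: "\<And>x. x < 2^n \<Longrightarrow> \<phi> x = complex_of_real r * (ket p x + ket q x)"
  shows "stab_term n W (proj \<phi>)"
  unfolding stab_term_def
proof (intro exI conjI)
  show "0 \<le> 2 * r\<^sup>2" by simp
  show "stab_state n (\<lambda>x. inv_sqrt2 * (ket p x + ket q x))" using stab_state_pair[OF p(1) q(1) pq] .
  show "\<forall>x<2^n. inv_sqrt2 * (ket p x + ket q x) \<noteq> 0 \<longrightarrow> x \<in> W" using p q by (simp add: ket_def)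
  show "mat_eq (2^n) (proj \<phi>) (\<lambda>x y. complex_of_real (2 * r\<^sup>2) * proj (\<lambda>x. inv_sqrt2 * (ket p x + ket q x)) x y)"
    unfolding mat_eq_def proj_def
  proof (intro allI impI)
    fix x y :: nat assume xy: "x < 2^n" "y < 2^n"
    have "\<phi> x * cnj (\<phi> y) = complex_of_real r * complex_of_real r * ((ket p x + ket q x) * (ket p y + ket q y))"
      using \<phi> xy by (simp add: mult_ac)
    also have "\<dots> = complex_of_real (2 * r\<^sup>2) * (inv_sqrt2 * inv_sqrt2) * ((ket p x + ket q x) * (ket p y + ket q y))"
      by (simp add: inv_sqrt2_mult_self power2_eq_square)
    also have "\<dots> = complex_of_real (2 * r\<^sup>2) * (inv_sqrt2 * (ket p x + ket q x) * cnj (inv_sqrt2 * (ket p y + ket q y)))"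
      by (simp add: mult_ac)
    finally show "\<phi> x * cnj (\<phi> y)
        = complex_of_real (2 * r\<^sup>2) * (inv_sqrt2 * (ket p x + ket q x) * cnj (inv_sqrt2 * (ket p y + ket q y)))" .
  qed
qed

lemma stab_cone_on_zero: "stab_cone_on n W (\<lambda>x y. 0)"
  unfolding stab_cone_on_def by (rule exI[of _ 0]) (simp add: mat_eq_def)

lemma stab_cone_on_add:
  assumes A: "stab_cone_on n W A" and P: "mat_eq (2^n) P (\<lambda>x y. 0) \<or> stab_term n W P"
  shows "stab_cone_on n W (\<lambda>x y. A x y + P x y)"
proof -
  obtain m :: nat and w \<phi> where H: "\<forall>j<m. w j \<ge> 0 \<and> stab_state n (\<phi> j) \<and> (\<forall>x<2^n. \<phi> j x \<noteq> 0 \<longrightarrow> x \<in> W)"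
    and E: "mat_eq (2^n) A (\<lambda>x y. \<Sum>j<m. complex_of_real (w j) * proj (\<phi> j) x y)"
    using A unfolding stab_cone_on_def by blast
  show ?thesis
  proof (cases "mat_eq (2^n) P (\<lambda>x y. 0)")
    case True
    then show ?thesis unfolding stab_cone_on_def using H E
      by (intro exI[of _ m] exI[of _ w] exI[of _ \<phi>]) (auto simp: mat_eq_def)
  next
    case False
    with P obtain wt \<psi> where wt: "wt \<ge> 0" and st: "stab_state n \<psi>" and sp: "\<forall>x<2^n. \<psi> x \<noteq> 0 \<longrightarrow> x \<in> W"
      and PE: "mat_eq (2^n) P (\<lambda>x y. complex_of_real wt * proj \<psi> x y)"
      unfolding stab_term_def by blast
    let ?w = "w(m := wt)" and ?\<phi> = "\<phi>(m := \<psi>)"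
    have "\<forall>j<Suc m. ?w j \<ge> 0 \<and> stab_state n (?\<phi> j) \<and> (\<forall>x<2^n. ?\<phi> j x \<noteq> 0 \<longrightarrow> x \<in> W)"
      using H wt st sp by (auto simp: less_Suc_eq)
    moreover have "mat_eq (2^n) (\<lambda>x y. A x y + P x y) (\<lambda>x y. \<Sum>j<Suc m. complex_of_real (?w j) * proj (?\<phi> j) x y)"
      using E PE by (simp add: mat_eq_def)
    ultimately show ?thesis unfolding stab_cone_on_def by blast
  qed
qed

lemma stab_cone_on_sum:
  assumes "finite T" and "\<And>t. t \<in> T \<Longrightarrow> mat_eq (2^n) (P t) (\<lambda>x y. 0) \<or> stab_term n W (P t)"
  shows "stab_cone_on n W (\<lambda>x y. \<Sum>t\<in>T. P t x y)"
  using assms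
proof (induction T rule: finite_induct)
  case empty then show ?case by (simp add: stab_cone_on_zero)
next
  case (insert t T)
  have "stab_cone_on n W (\<lambda>x y. (\<Sum>t\<in>T. P t x y) + P t x y)"
    using insert by (intro stab_cone_on_add) auto
  then show ?case using insert by (simp add: add.commute)
qed

lemma stab_cone_on_mono: "stab_cone_on n W A \<Longrightarrow> W \<subseteq> W' \<Longrightarrow> stab_cone_on n W' A"
  unfolding stab_cone_on_def by blast

lemma stab_cone_on_mat_eq: "stab_cone_on n W A \<Longrightarrow> mat_eq (2^n) B A \<Longrightarrow> stab_cone_on n W B"
  unfolding stab_cone_on_def by (meson mat_eq_trans)

lemma stab_cone_on_vanishes:
  assumes "stab_cone_on n W A" "x < 2^n" "y < 2^n" "x \<notin> W \<or> y \<notin> W"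
  shows "A x y = 0"
proof -
  obtain m :: nat and w \<phi> where H: "\<forall>j<m. \<forall>x<2^n. \<phi> j x \<noteq> 0 \<longrightarrow> x \<in> W"
    and E: "mat_eq (2^n) A (\<lambda>x y. \<Sum>j<m. complex_of_real (w j) * proj (\<phi> j) x y)"
    using assms(1) unfolding stab_cone_on_def by blast
  have "A x y = (\<Sum>j<m. complex_of_real (w j) * proj (\<phi> j) x y)" using E assms by (simp add: mat_eq_def)
  also have "\<dots> = 0" using H assms by (intro sum.neutral) (auto simp: proj_def)
  finally show ?thesis .
qed

lemma stab_polytope_if_cone_trace_1:
  assumes C: "stab_cone_on n UNIV \<rho>" and tr: "(\<Sum>x<2^n. \<rho> x x) = 1"
  shows "\<rho> \<in> stab_polytope n"
proof -
  obtain m :: nat and w \<phi> where H: "\<forall>j<m. w j \<ge> 0 \<and> stab_state n (\<phi> j)"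
    and E: "mat_eq (2^n) \<rho> (\<lambda>x y. \<Sum>j<m. complex_of_real (w j) * proj (\<phi> j) x y)"
    using C unfolding stab_cone_on_def by blast
  have "(\<Sum>x<2^n. \<rho> x x) = (\<Sum>x<2^n. \<Sum>j<m. complex_of_real (w j) * proj (\<phi> j) x x)"
    using E by (intro sum.cong) (auto simp: mat_eq_def)
  also have "\<dots> = (\<Sum>j<m. complex_of_real (w j) * (\<Sum>x<2^n. \<phi> j x * cnj (\<phi> j x)))"
    by (subst sum.swap) (simp add: proj_def sum_distrib_left)
  also have "\<dots> = (\<Sum>j<m. complex_of_real (w j))"
    using H stab_state_norm by (intro sum.cong) auto
  finally have "(\<Sum>j<m. w j) = 1" using tr by (metis of_real_1 of_real_eq_iff of_real_sum)
  then show ?thesis unfolding stab_polytope_def using H E by blast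
qed

text \<open>In a mixture \<open>\<Sum>\<^sub>j w\<^sub>j |\<phi>\<^sub>j\<rangle>\<langle>\<phi>\<^sub>j|\<close> the combination \<open>\<rho>\<^sub>a\<^sub>a - \<rho>\<^sub>a\<^sub>b - \<rho>\<^sub>b\<^sub>a + \<rho>\<^sub>b\<^sub>b\<close> equals
  \<open>\<Sum>\<^sub>j w\<^sub>j |\<phi>\<^sub>j a - \<phi>\<^sub>j b|\<^sup>2\<close>.\<close>

lemma mixture_amplitudes_eq:
  fixes w :: "nat \<Rightarrow> real"
  assumes w: "\<forall>j<m. w j \<ge> 0"
    and \<rho>: "\<And>x y. x \<in> {a, b} \<Longrightarrow> y \<in> {a, b} \<Longrightarrow> \<rho> x y = (\<Sum>j<m. complex_of_real (w j) * (\<phi> j x * cnj (\<phi> j y)))"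
    and const: "\<rho> a a = \<rho> a b" "\<rho> b a = \<rho> b b"
    and j: "j < m" "w j \<noteq> 0"
  shows "\<phi> j a = \<phi> j b"
proof -
  have "complex_of_real (\<Sum>j<m. w j * (cmod (\<phi> j a - \<phi> j b))\<^sup>2)
      = (\<Sum>j<m. complex_of_real (w j) * ((\<phi> j a - \<phi> j b) * cnj (\<phi> j a - \<phi> j b)))"
    by (simp only: of_real_sum of_real_mult complex_norm_square)
  also have "\<dots> = \<rho> a a - \<rho> a b - \<rho> b a + \<rho> b b"
    by (simp add: \<rho> algebra_simps sum.distrib sum_subtractf)
  also have "\<dots> = 0" using const by simp
  finally have "(\<Sum>j<m. w j * (cmod (\<phi> j a - \<phi> j b))\<^sup>2) = 0"
    by (simp only: of_real_eq_0_iff)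
  then have "\<forall>j\<in>{..<m}. w j * (cmod (\<phi> j a - \<phi> j b))\<^sup>2 = 0"
    using w by (subst sum_nonneg_eq_0_iff[symmetric]) auto
  then show ?thesis using j by auto
qed

lemma stab_state_plane_norm:
  assumes "stab_state n \<phi>" "u < 2^n" "v < 2^n" "\<phi> u = \<phi> v" "\<phi> u = \<phi> (u XOR v)"
  shows "\<phi> u = 0 \<or> cmod (\<phi> 0) = cmod (\<phi> u)"
  using assms stab_state_norm_xor_invariant[of n \<phi> u v 0] by auto

lemma stab_polytope_bound:
  assumes P: "\<rho> \<in> stab_polytope n" and u: "u < 2^n" and v: "v < 2^n"
    and const: "\<And>a b. a \<in> {u, v, u XOR v} \<Longrightarrow> b \<in> {u, v, u XOR v} \<Longrightarrow> \<rho> a b = complex_of_real s"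
  shows "s \<le> Re (\<rho> 0 0)" and "cmod (\<rho> 0 u) \<le> s"
proof -
  let ?N = "2^n::nat"
  obtain m :: nat and w \<phi> where H: "\<forall>j<m. w j \<ge> 0 \<and> stab_state n (\<phi> j)"
    and E: "mat_eq ?N \<rho> (\<lambda>x y. \<Sum>j<m. complex_of_real (w j) * proj (\<phi> j) x y)"
    using P unfolding stab_polytope_def by blast
  have \<rho>: "\<rho> x y = (\<Sum>j<m. complex_of_real (w j) * (\<phi> j x * cnj (\<phi> j y)))" if "x < ?N" "y < ?N" for x y
    using E that by (simp add: mat_eq_def proj_def)
  have L: "x < ?N" if "x \<in> {u, v, u XOR v}" for x
    using that u v xor_less_exp by auto
  have amp_eq: "\<phi> j a = \<phi> j b"
    if ab: "a \<in> {u, v, u XOR v}" "b \<in> {u, v, u XOR v}" and j: "j < m" "w j \<noteq> 0" for a b j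
  proof (rule mixture_amplitudes_eq[where \<rho> = \<rho> and w = w and m = m, OF _ _ _ _ j])
    show "\<forall>j<m. 0 \<le> w j" using H by simp
    show "\<rho> x y = (\<Sum>j<m. complex_of_real (w j) * (\<phi> j x * cnj (\<phi> j y)))"
      if "x \<in> {a, b}" "y \<in> {a, b}" for x y
      using that ab L by (intro \<rho>) auto
    show "\<rho> a a = \<rho> a b" "\<rho> b a = \<rho> b b" using const ab by simp_all
  qed
  have norm0: "w j * cmod (\<phi> j 0) * cmod (\<phi> j u) = w j * (cmod (\<phi> j u))\<^sup>2"
    and normu: "w j * (cmod (\<phi> j u))\<^sup>2 \<le> w j * (cmod (\<phi> j 0))\<^sup>2" if j: "j < m" for j
  proof -
    have "\<phi> j u = 0 \<or> cmod (\<phi> j 0) = cmod (\<phi> j u)" if "w j \<noteq> 0"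
      using that j H u v amp_eq[of u v j] amp_eq[of u "u XOR v" j] by (intro stab_state_plane_norm) auto
    then show "w j * cmod (\<phi> j 0) * cmod (\<phi> j u) = w j * (cmod (\<phi> j u))\<^sup>2"
      and "w j * (cmod (\<phi> j u))\<^sup>2 \<le> w j * (cmod (\<phi> j 0))\<^sup>2"
      using H j by (cases "w j = 0"; auto simp: power2_eq_square)+
  qed
  have diag: "Re (\<rho> x x) = (\<Sum>j<m. w j * (cmod (\<phi> j x))\<^sup>2)" if "x < ?N" for x
  proof -
    have "\<rho> x x = complex_of_real (\<Sum>j<m. w j * (cmod (\<phi> j x))\<^sup>2)"
      unfolding \<rho>[OF that that] of_real_sum of_real_mult complex_norm_square ..
    then show ?thesis by simp
  qed
  have s: "s = (\<Sum>j<m. w j * (cmod (\<phi> j u))\<^sup>2)"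
    using diag[OF u] const[of u u] by simp
  show "s \<le> Re (\<rho> 0 0)"
    using diag[of 0] s sum_mono[of "{..<m}", OF normu] by simp
  have "cmod (\<rho> 0 u) \<le> (\<Sum>j<m. cmod (complex_of_real (w j) * (\<phi> j 0 * cnj (\<phi> j u))))"
    unfolding \<rho>[OF _ u, of 0, simplified] by (rule norm_sum)
  also have "\<dots> = (\<Sum>j<m. w j * cmod (\<phi> j 0) * cmod (\<phi> j u))"
    using H by (intro sum.cong) (auto simp: norm_mult)
  also have "\<dots> = s"
    unfolding s by (intro sum.cong) (simp_all add: norm0)
  finally show "cmod (\<rho> 0 u) \<le> s" .
qed

section \<open>The amplitude damping channel\<close>

definition kraus_op :: "nat \<Rightarrow> real \<Rightarrow> nat \<Rightarrow> nat \<Rightarrow> nat \<Rightarrow> complex" where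
  "kraus_op n g t = tensor n (\<lambda>i. ad_kraus g (bit t i))"

definition kraus_apply :: "nat \<Rightarrow> real \<Rightarrow> nat \<Rightarrow> (nat \<Rightarrow> complex) \<Rightarrow> nat \<Rightarrow> complex" where
  "kraus_apply n g t \<psi> x = (\<Sum>l<2^n. kraus_op n g t x l * \<psi> l)"

lemma ad_channel_proj:
  "ad_channel n g (proj \<psi>) x y = (\<Sum>t<2^n. kraus_apply n g t \<psi> x * cnj (kraus_apply n g t \<psi> y))"
proof -
  have "mmul (2^n) (mmul (2^n) (kraus_op n g t) (proj \<psi>)) (adj (kraus_op n g t)) x y
      = kraus_apply n g t \<psi> x * cnj (kraus_apply n g t \<psi> y)" for t
    unfolding mmul_def proj_def adj_def kraus_apply_def
    by (simp add: sum_distrib_right sum_distrib_left mult_ac)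
  then show ?thesis by (simp add: ad_channel_def kraus_op_def Let_def)
qed

lemma kraus_op_entry:
  assumes x: "x < 2^n" and b: "b < 2^n" and t: "t < 2^n"
  shows "kraus_op n g t x b = (if bits_le n t b \<and> x = b XOR t
      then complex_of_real (sqrt g ^ card {i. i < n \<and> bit t i} * sqrt (1 - g) ^ card {i. i < n \<and> bit b i \<and> \<not> bit t i})
      else 0)"
proof -
  let ?C = "\<lambda>i. if bit t i then (\<not> bit x i \<and> bit b i) else bit x i = bit b i"
  let ?f = "\<lambda>i. if bit t i then sqrt g else if bit b i then sqrt (1 - g) else 1"
  have "kraus_op n g t x b = (\<Prod>i<n. if ?C i then complex_of_real (?f i) else 0)"
    unfolding kraus_op_def tensor_def by (rule prod.cong) (auto simp: ad_kraus_def)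
  also have "\<dots> = (if \<forall>i<n. ?C i then (\<Prod>i<n. complex_of_real (?f i)) else 0)"
    by (rule prod_if_else_zero)
  also have "(\<forall>i<n. ?C i) \<longleftrightarrow> bits_le n t b \<and> x = b XOR t"
  proof
    assume C: "\<forall>i<n. ?C i"
    have "x = b XOR t"
      by (rule eq_if_low_bits_eq[OF x xor_less_exp[OF b t]]) (use C in \<open>auto simp: bit_xor_iff split: if_splits\<close>)
    then show "bits_le n t b \<and> x = b XOR t" using C by (auto simp: bits_le_def split: if_splits)
  qed (auto simp: bit_xor_iff bits_le_def)
  also have "(\<Prod>i<n. complex_of_real (?f i)) = complex_of_real (\<Prod>i<n. ?f i)"
    by simp
  also have "(\<Prod>i<n. ?f i) = sqrt g ^ card {i. i < n \<and> bit t i} * sqrt (1 - g) ^ card {i. i < n \<and> bit b i \<and> \<not> bit t i}"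
    by (rule prod_if_if_eq_powers)
  finally show ?thesis .
qed

lemma kraus_op_entry_ket:
  assumes x: "x < 2^n" and b: "b < 2^n" and t: "t < 2^n"
  shows "kraus_op n g t x b = (if bits_le n t b
    then complex_of_real (sqrt g ^ hw n t * sqrt (1 - g) ^ (hw n b - hw n t)) * ket (b XOR t) x else 0)"
  using kraus_op_entry[OF x b t, of g] card_bits_diff[of n t b] by (auto simp: hw_def ket_def)

lemma kraus_op_col0:
  assumes x: "x < 2^n" and t: "t < 2^n"
  shows "kraus_op n g t x 0 = (if t = 0 \<and> x = 0 then 1 else 0)"
proof -
  have "bits_le n t 0 \<longleftrightarrow> t = 0"
    using eq_if_low_bits_eq[OF t, of 0] by (auto simp: bits_le_def)
  then show ?thesis using kraus_op_entry[OF x _ t, of 0 g] by auto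
qed

lemma ad_kraus_complete:
  assumes "0 \<le> g" "g \<le> 1"
  shows "(\<Sum>\<xi>\<in>{False, True}. \<Sum>\<tau>\<in>{False, True}. ad_kraus g \<tau> \<xi> p * cnj (ad_kraus g \<tau> \<xi> q))
    = (if p = q then 1 else 0)"
proof -
  have "complex_of_real (sqrt g) * complex_of_real (sqrt g) = complex_of_real g"
    and "complex_of_real (sqrt (1 - g)) * complex_of_real (sqrt (1 - g)) = complex_of_real (1 - g)"
    using assms by (simp_all flip: of_real_mult)
  then show ?thesis by (cases p; cases q) (simp_all add: ad_kraus_def)
qed

lemma kraus_ops_complete:
  assumes a: "a < 2^n" and b: "b < 2^n" and g: "0 \<le> g" "g \<le> 1"
  shows "(\<Sum>x<2^n. \<Sum>t<2^n. kraus_op n g t x a * cnj (kraus_op n g t x b)) = (if a = b then 1 else 0)"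
proof -
  let ?F = "\<lambda>i \<xi> \<tau>. ad_kraus g \<tau> \<xi> (bit a i) * cnj (ad_kraus g \<tau> \<xi> (bit b i))"
  have "(\<Sum>x::nat<2^n. \<Sum>t::nat<2^n. kraus_op n g t x a * cnj (kraus_op n g t x b))
      = (\<Sum>x::nat<2^n. \<Sum>t::nat<2^n. \<Prod>i<n. ?F i (bit x i) (bit t i))"
    by (simp add: kraus_op_def tensor_def prod.distrib)
  also have "\<dots> = (\<Sum>x::nat<2^n. \<Prod>i<n. ?F i (bit x i) False + ?F i (bit x i) True)"
    by (rule sum.cong[OF refl], rule sum_bitstrings_prod)
  also have "\<dots> = (\<Prod>i<n. (?F i False False + ?F i False True) + (?F i True False + ?F i True True))"
    by (rule sum_bitstrings_prod)
  also have "\<dots> = (\<Prod>i<n. if bit a i = bit b i then 1 else 0)"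
    using ad_kraus_complete[OF g] by (intro prod.cong) simp_all
  also have "\<dots> = (if a = b then 1 else 0)"
    using eq_if_low_bits_eq[OF a b] by (simp add: prod_if_else_zero)
  finally show ?thesis .
qed

lemma ad_channel_trace:
  assumes g: "0 \<le> g" "g \<le> 1"
  shows "(\<Sum>x<2^n. ad_channel n g (proj \<psi>) x x) = (\<Sum>l<2^n. \<psi> l * cnj (\<psi> l))"
proof -
  let ?N = "2^n::nat"
  let ?K = "\<lambda>t x l. kraus_op n g t x l"
  have "(\<Sum>x<?N. ad_channel n g (proj \<psi>) x x)
      = (\<Sum>x<?N. \<Sum>t<?N. \<Sum>l<?N. \<Sum>m<?N. (\<psi> l * cnj (\<psi> m)) * (?K t x l * cnj (?K t x m)))"
    by (simp add: ad_channel_proj kraus_apply_def sum_product mult_ac)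
  also have "\<dots> = (\<Sum>l<?N. \<Sum>m<?N. (\<psi> l * cnj (\<psi> m)) * (\<Sum>x<?N. \<Sum>t<?N. ?K t x l * cnj (?K t x m)))"
    unfolding sum_distrib_left
    by (subst (2) sum.swap, subst sum.swap, subst (3) sum.swap, subst (2) sum.swap) (rule refl)
  also have "\<dots> = (\<Sum>l<?N. \<psi> l * cnj (\<psi> l))"
    by (simp add: kraus_ops_complete[OF _ _ g] if_distrib cong: if_cong)
  finally show ?thesis .
qed

section \<open>The damped plane state\<close>

lemma kraus_apply_psi_L:
  assumes u: "u < 2^n" and v: "v < 2^n"
  shows "kraus_apply n g t (psi_L u v a b) x = complex_of_real a * kraus_op n g t x 0
     + complex_of_real b * complex_of_real (1 / sqrt 3)
       * (kraus_op n g t x u + kraus_op n g t x v + kraus_op n g t x (u XOR v))"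
proof -
  let ?K = "kraus_op n g t x" and ?c = "complex_of_real b * complex_of_real (1 / sqrt 3)"
  have "kraus_apply n g t (psi_L u v a b) x = (\<Sum>l<2^n. complex_of_real a * (?K l * ket 0 l)
      + ?c * (?K l * ket u l) + ?c * (?K l * ket v l) + ?c * (?K l * ket (u XOR v) l))"
    unfolding kraus_apply_def psi_L_def D_L_def by (rule sum.cong) (simp_all add: algebra_simps)
  also have "\<dots> = complex_of_real a * (\<Sum>l<2^n. ?K l * ket 0 l)
      + ?c * (\<Sum>l<2^n. ?K l * ket u l) + ?c * (\<Sum>l<2^n. ?K l * ket v l) + ?c * (\<Sum>l<2^n. ?K l * ket (u XOR v) l)"
    by (simp add: sum.distrib sum_distrib_left)
  also have "\<dots> = complex_of_real a * ?K 0 + ?c * (?K u + ?K v + ?K (u XOR v))"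
    using sum_mult_ket[of 0 "2^n"]
    by (simp only: zero_less_power zero_less_numeral simp_thms sum_mult_ket[OF u] sum_mult_ket[OF v]
        sum_mult_ket[OF xor_less_exp[OF u v]] distrib_left add.assoc)
  finally show ?thesis .
qed

locale equal_weight_plane =
  fixes n k u v :: nat
  assumes u: "u < 2^n" and v: "v < 2^n" and u0: "u \<noteq> 0" and v0: "v \<noteq> 0" and uv: "u \<noteq> v"
    and hw_u: "hw n u = k" and hw_v: "hw n v = k" and hw_uv: "hw n (u XOR v) = k"
begin

abbreviation inner_weights :: "nat set" where
  "inner_weights \<equiv> {x. 1 \<le> hw n x \<and> hw n x \<le> k - 1}"

lemma xor_uv_less: "u XOR v < 2^n"
  using xor_less_exp[OF u v] .

lemma xor_uv_distinct: "u XOR v \<noteq> 0" "u XOR v \<noteq> u" "u XOR v \<noteq> v"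
  using uv u0 v0 by (simp_all add: xor_eq_0_iff xor_eq_left_iff xor_eq_right_iff)

lemma plane_less: "a \<in> {u, v, u XOR v} \<Longrightarrow> a < 2^n"
  using u v xor_uv_less by auto

lemma plane_hw: "a \<in> {u, v, u XOR v} \<Longrightarrow> hw n a = k"
  using hw_u hw_v hw_uv by auto

lemma plane_nonzero: "a \<in> {u, v, u XOR v} \<Longrightarrow> a \<noteq> 0"
  using u0 v0 xor_uv_distinct by auto

lemma weight_pos: "1 \<le> k"
  using hw_eq_0_iff[OF u] u0 hw_u by simp

lemma bits_le_plane_imp_eq: "a \<in> {u, v, u XOR v} \<Longrightarrow> b \<in> {u, v, u XOR v} \<Longrightarrow> bits_le n a b \<Longrightarrow> a = b"
  using bits_le_hw_eq_imp_eq plane_less plane_hw by metis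

lemma bits_le_plane_iff: "a \<in> {u, v, u XOR v} \<Longrightarrow> b \<in> {u, v, u XOR v} \<Longrightarrow> bits_le n a b \<longleftrightarrow> a = b"
  using bits_le_plane_imp_eq[of a b] by (auto simp: bits_le_def)

lemma not_bits_le_plane:
  assumes "t < 2^n" "t \<noteq> 0"
  shows "\<not> (bits_le n t u \<and> bits_le n t v \<and> bits_le n t (u XOR v))"
proof -
  obtain i where "i < n" "bit t i" using assms eq_if_low_bits_eq[OF assms(1), of 0] by auto
  then show ?thesis by (auto simp: bits_le_def bit_xor_iff)
qed

lemma decayed_in_inner_weights:
  assumes t: "t < 2^n" and tn: "t \<notin> {0, u, v, u XOR v}" and b: "b \<in> {u, v, u XOR v}" and le: "bits_le n t b"
  shows "b XOR t \<in> inner_weights"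
proof -
  have "t \<noteq> 0" "t \<noteq> b" using tn b by auto
  then have "hw n t \<noteq> 0" "hw n t \<noteq> hw n b"
    using hw_eq_0_iff[OF t] bits_le_hw_eq_imp_eq[OF t plane_less[OF b] le] by auto
  moreover have "hw n t \<le> hw n b" using bits_le_imp_hw_le[OF le] .
  ultimately show ?thesis
    unfolding mem_Collect_eq hw_xor_bits_le[OF le] plane_hw[OF b] by linarith
qed

definition decay_amp :: "real \<Rightarrow> nat \<Rightarrow> real" where
  "decay_amp g t = sqrt g ^ hw n t * sqrt (1 - g) ^ (k - hw n t)"

lemma kraus_apply_psi_L_eq:
  assumes t: "t < 2^n" and x: "x < 2^n"
  shows "kraus_apply n g t (psi_L u v a b) x = complex_of_real a * (if t = 0 \<and> x = 0 then 1 else 0)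
     + complex_of_real b * complex_of_real (1 / sqrt 3) *
       ((if bits_le n t u then complex_of_real (decay_amp g t) * ket (u XOR t) x else 0)
      + (if bits_le n t v then complex_of_real (decay_amp g t) * ket (v XOR t) x else 0)
      + (if bits_le n t (u XOR v) then complex_of_real (decay_amp g t) * ket ((u XOR v) XOR t) x else 0))"
  unfolding kraus_apply_psi_L[OF u v] kraus_op_col0[OF x t] kraus_op_entry_ket[OF x u t]
    kraus_op_entry_ket[OF x v t] kraus_op_entry_ket[OF x xor_uv_less t] hw_u hw_v hw_uv decay_amp_def
  by (rule refl)

lemma kraus_apply_psi_L_0:
  assumes x: "x < 2^n"
  shows "kraus_apply n g 0 (psi_L u v a b) x = complex_of_real a * ket 0 x
     + complex_of_real b * complex_of_real (1 / sqrt 3) * complex_of_real (sqrt (1 - g) ^ k)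
       * (ket u x + ket v x + ket (u XOR v) x)"
proof -
  have "bits_le n 0 c" for c by (simp add: bits_le_def)
  moreover have "decay_amp g 0 = sqrt (1 - g) ^ k" by (simp add: decay_amp_def hw_def)
  moreover have z: "(0::nat) < 2^n" by simp
  ultimately show ?thesis
    unfolding kraus_apply_psi_L_eq[OF z x] by (simp add: ket_def algebra_simps)
qed

lemma kraus_apply_psi_L_plane:
  assumes c: "c \<in> {u, v, u XOR v}" and x: "x < 2^n"
  shows "kraus_apply n g c (psi_L u v a b) x
    = complex_of_real b * complex_of_real (1 / sqrt 3) * complex_of_real (sqrt g ^ k) * ket 0 x"
proof -
  have "decay_amp g c = sqrt g ^ k" using plane_hw[OF c] by (simp add: decay_amp_def)
  moreover have "bits_le n c u \<longleftrightarrow> c = u" "bits_le n c v \<longleftrightarrow> c = v" "bits_le n c (u XOR v) \<longleftrightarrow> c = u XOR v"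
    using bits_le_plane_iff[OF c] by auto
  ultimately show ?thesis
    unfolding kraus_apply_psi_L_eq[OF plane_less[OF c] x]
    using c plane_nonzero[OF c] uv xor_uv_distinct by (auto simp: xor_self_eq)
qed

lemma kraus_apply_psi_L_decayed:
  assumes t: "t < 2^n" "t \<noteq> 0" and x: "x < 2^n"
  shows "kraus_apply n g t (psi_L u v a b) x = complex_of_real (b * (1 / sqrt 3) * decay_amp g t) *
       ((if bits_le n t u then ket (u XOR t) x else 0) + (if bits_le n t v then ket (v XOR t) x else 0)
        + (if bits_le n t (u XOR v) then ket ((u XOR v) XOR t) x else 0))"
proof -
  have pull: "(if P then c * z else 0) = c * (if P then z else 0)" for P and c z :: complex
    by simp
  show ?thesis
    unfolding kraus_apply_psi_L_eq[OF t(1) x] pull using t(2)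
    by (simp add: distrib_left mult_ac split del: if_split)
qed

lemma kraus_apply_psi_L_other:
  assumes t: "t < 2^n" and tn: "t \<notin> {0, u, v, u XOR v}"
  shows "mat_eq (2^n) (proj (kraus_apply n g t (psi_L u v a b))) (\<lambda>x y. 0)
    \<or> stab_term n inner_weights (proj (kraus_apply n g t (psi_L u v a b)))"
proof -
  let ?r = "b * (1 / sqrt 3) * decay_amp g t"
  have t0: "t \<noteq> 0" using tn by auto
  note \<phi> = kraus_apply_psi_L_decayed[OF t t0]
  have W: "c XOR t \<in> inner_weights" "c XOR t < 2^n" if "c \<in> {u, v, u XOR v}" "bits_le n t c" for c
    using decayed_in_inner_weights[OF t tn that] xor_less_exp[OF plane_less[OF that(1)] t] by auto
  have distinct: "u XOR t \<noteq> v XOR t" "u XOR t \<noteq> (u XOR v) XOR t" "v XOR t \<noteq> (u XOR v) XOR t"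
    using uv xor_uv_distinct by (simp_all add: xor_right_cancel)
  consider "\<not> bits_le n t u" "\<not> bits_le n t v" "\<not> bits_le n t (u XOR v)"
    | "bits_le n t u" "\<not> bits_le n t v" "\<not> bits_le n t (u XOR v)"
    | "\<not> bits_le n t u" "bits_le n t v" "\<not> bits_le n t (u XOR v)"
    | "\<not> bits_le n t u" "\<not> bits_le n t v" "bits_le n t (u XOR v)"
    | "bits_le n t u" "bits_le n t v" "\<not> bits_le n t (u XOR v)"
    | "bits_le n t u" "\<not> bits_le n t v" "bits_le n t (u XOR v)"
    | "\<not> bits_le n t u" "bits_le n t v" "bits_le n t (u XOR v)"
    using not_bits_le_plane[OF t t0] by blast
  then show ?thesis
  proof cases
    case 1 then show ?thesis using \<phi> by (simp add: mat_eq_def proj_def)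
  next
    case 2 then show ?thesis using W[of u] \<phi> by (intro disjI2 stab_term_ket[of "u XOR t" n _ _ ?r]) simp_all
  next
    case 3 then show ?thesis using W[of v] \<phi> by (intro disjI2 stab_term_ket[of "v XOR t" n _ _ ?r]) simp_all
  next
    case 4 then show ?thesis using W[of "u XOR v"] \<phi> by (intro disjI2 stab_term_ket[of "(u XOR v) XOR t" n _ _ ?r]) simp_all
  next
    case 5 then show ?thesis
      using W[of u] W[of v] \<phi> distinct by (intro disjI2 stab_term_pair[of "u XOR t" n _ "v XOR t" _ ?r]) simp_all
  next
    case 6 then show ?thesis
      using W[of u] W[of "u XOR v"] \<phi> distinct by (intro disjI2 stab_term_pair[of "u XOR t" n _ "(u XOR v) XOR t" _ ?r]) simp_all
  next
    case 7 then show ?thesis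
      using W[of v] W[of "u XOR v"] \<phi> distinct by (intro disjI2 stab_term_pair[of "v XOR t" n _ "(u XOR v) XOR t" _ ?r]) simp_all
  qed
qed

lemma D_L_plane: "p \<in> {u, v, u XOR v} \<Longrightarrow> D_L u v p = complex_of_real (1 / sqrt 3)"
  using uv xor_uv_distinct by (auto simp: D_L_def ket_def)

lemma D_L_0: "D_L u v 0 = 0"
  using u0 v0 xor_uv_distinct by (simp add: D_L_def ket_def)

lemma plane_branches_sum:
  assumes x: "x < 2^n" and y: "y < 2^n" and g: "0 \<le> g" "g \<le> 1"
  shows "(\<Sum>t\<in>{0, u, v, u XOR v}. kraus_apply n g t (psi_L u v a b) x * cnj (kraus_apply n g t (psi_L u v a b) y))
    = complex_of_real (a\<^sup>2 + b\<^sup>2 * g ^ k) * proj (ket 0) x y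
      + complex_of_real (b\<^sup>2 * (1 - g) ^ k) * proj (D_L u v) x y
      + complex_of_real (a * b * sqrt (1 - g) ^ k) * (ket 0 x * cnj (D_L u v y) + D_L u v x * cnj (ket 0 y))"
proof -
  let ?f = "\<lambda>t. kraus_apply n g t (psi_L u v a b) x * cnj (kraus_apply n g t (psi_L u v a b) y)"
  let ?r3 = "complex_of_real (1 / sqrt 3)" and ?sq = "complex_of_real (sqrt (1 - g) ^ k)"
    and ?sg = "complex_of_real (sqrt g ^ k)" and ?a = "complex_of_real a" and ?b = "complex_of_real b"
  let ?Sx = "ket u x + ket v x + ket (u XOR v) x" and ?Sy = "ket u y + ket v y + ket (u XOR v) y"
  have r3: "?r3 * ?r3 = 1/3" by (simp flip: of_real_mult)
  have sq: "?sq * ?sq = complex_of_real ((1 - g) ^ k)" using g by (simp flip: of_real_mult power_mult_distrib)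
  have sg: "?sg * ?sg = complex_of_real (g ^ k)" using g by (simp flip: of_real_mult power_mult_distrib)
  have "(\<Sum>t\<in>{0, u, v, u XOR v}. ?f t) = ?f 0 + ?f u + ?f v + ?f (u XOR v)"
    using u0 v0 uv xor_uv_distinct by (simp add: add.assoc)
  also have "\<dots> = (?a * ket 0 x + ?b * ?r3 * ?sq * ?Sx) * (?a * ket 0 y + ?b * ?r3 * ?sq * ?Sy)
      + (?b * ?r3 * ?sg * ket 0 x) * (?b * ?r3 * ?sg * ket 0 y)
      + (?b * ?r3 * ?sg * ket 0 x) * (?b * ?r3 * ?sg * ket 0 y)
      + (?b * ?r3 * ?sg * ket 0 x) * (?b * ?r3 * ?sg * ket 0 y)"
  proof -
    have L: "u \<in> {u, v, u XOR v}" "v \<in> {u, v, u XOR v}" "u XOR v \<in> {u, v, u XOR v}" by auto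
    show ?thesis
      unfolding kraus_apply_psi_L_0[OF x] kraus_apply_psi_L_0[OF y]
        kraus_apply_psi_L_plane[OF L(1) x] kraus_apply_psi_L_plane[OF L(1) y]
        kraus_apply_psi_L_plane[OF L(2) x] kraus_apply_psi_L_plane[OF L(2) y]
        kraus_apply_psi_L_plane[OF L(3) x] kraus_apply_psi_L_plane[OF L(3) y]
      by simp
  qed
  also have "\<dots> = (?a\<^sup>2 + ?b\<^sup>2 * (?sg * ?sg)) * (ket 0 x * ket 0 y) + (?b\<^sup>2 * (?sq * ?sq)) * ((?r3 * ?Sx) * (?r3 * ?Sy))
      + (?a * ?b * ?sq) * (ket 0 x * (?r3 * ?Sy) + (?r3 * ?Sx) * ket 0 y)"
  proof -
    text \<open>The three decay branches add up to the weight \<open>g\<^sup>k\<close> on \<open>|0\<rangle>\<close> because \<open>3 r\<^sup>2 = 1\<close>.\<close>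
    have identity: "(A*X + B*r*s*S) * (A*Y + B*r*s*T) + (B*r*c*X) * (B*r*c*Y) + (B*r*c*X) * (B*r*c*Y)
        + (B*r*c*X) * (B*r*c*Y)
      = (A\<^sup>2 + B\<^sup>2*(c*c)) * (X*Y) + (B\<^sup>2*(s*s)) * ((r*S)*(r*T)) + (A*B*s) * (X*(r*T) + (r*S)*Y)"
      if "r * r = 1/3" for A B r s c X Y S T :: complex
    proof -
      have "(A*X + B*r*s*S) * (A*Y + B*r*s*T) + (B*r*c*X) * (B*r*c*Y) + (B*r*c*X) * (B*r*c*Y)
          + (B*r*c*X) * (B*r*c*Y)
        = (A\<^sup>2 + B\<^sup>2*(c*c)) * (X*Y) + (B\<^sup>2*(s*s)) * ((r*S)*(r*T)) + (A*B*s) * (X*(r*T) + (r*S)*Y)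
          + B\<^sup>2*(c*c)*(X*Y) * (3 * (r*r) - 1)"
        by (simp add: power2_eq_square algebra_simps)
      from this[unfolded that] show ?thesis by simp
    qed
    show ?thesis by (rule identity[OF r3])
  qed
  also have "\<dots> = complex_of_real (a\<^sup>2 + b\<^sup>2 * g ^ k) * proj (ket 0) x y
      + complex_of_real (b\<^sup>2 * (1 - g) ^ k) * proj (D_L u v) x y
      + complex_of_real (a * b * sqrt (1 - g) ^ k) * (ket 0 x * cnj (D_L u v y) + D_L u v x * cnj (ket 0 y))"
    unfolding r3 sq sg by (simp add: proj_def D_L_def)
  finally show ?thesis .
qed

lemma other_branches_stab_cone:
  "stab_cone_on n inner_weights (\<lambda>x y. \<Sum>t\<in>{..<2^n} - {0, u, v, u XOR v}.
     kraus_apply n g t (psi_L u v a b) x * cnj (kraus_apply n g t (psi_L u v a b) y))"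
  using stab_cone_on_sum[of "{..<2^n} - {0, u, v, u XOR v}" n "\<lambda>t. proj (kraus_apply n g t (psi_L u v a b))"]
    kraus_apply_psi_L_other by (simp add: proj_def)

lemma rho_L_decomposition:
  assumes g: "0 \<le> g" "g \<le> 1"
  shows "\<exists>\<Omega>. mat_eq (2^n) (rho_L n u v a b g)
     (\<lambda>x y. complex_of_real (a\<^sup>2 + b\<^sup>2 * g ^ k) * proj (ket 0) x y
          + complex_of_real (b\<^sup>2 * (1 - g) ^ k) * proj (D_L u v) x y
          + complex_of_real (a * b * sqrt (1 - g) ^ k) * (ket 0 x * cnj (D_L u v y) + D_L u v x * cnj (ket 0 y))
          + \<Omega> x y) \<and> stab_cone_on n inner_weights \<Omega>"
proof (intro exI conjI)
  let ?f = "\<lambda>t x y. kraus_apply n g t (psi_L u v a b) x * cnj (kraus_apply n g t (psi_L u v a b) y)"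
  let ?T = "{..<2^n} - {0, u, v, u XOR v}"
  show "stab_cone_on n inner_weights (\<lambda>x y. \<Sum>t\<in>?T. ?f t x y)"
    by (rule other_branches_stab_cone)
  have split: "{..<2^n} = {0, u, v, u XOR v} \<union> ?T" using u v xor_uv_less by auto
  show "mat_eq (2^n) (rho_L n u v a b g)
     (\<lambda>x y. complex_of_real (a\<^sup>2 + b\<^sup>2 * g ^ k) * proj (ket 0) x y
          + complex_of_real (b\<^sup>2 * (1 - g) ^ k) * proj (D_L u v) x y
          + complex_of_real (a * b * sqrt (1 - g) ^ k) * (ket 0 x * cnj (D_L u v y) + D_L u v x * cnj (ket 0 y))
          + (\<Sum>t\<in>?T. ?f t x y))"
    unfolding mat_eq_def rho_L_def ad_channel_proj
    by (subst split, subst sum.union_disjoint) (auto simp: plane_branches_sum[OF _ _ g])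
qed

lemma psi_L_norm: "(\<Sum>l<2^n. psi_L u v a b l * cnj (psi_L u v a b l)) = complex_of_real (a\<^sup>2 + b\<^sup>2)"
proof -
  have r3: "complex_of_real (1 / sqrt 3) * complex_of_real (1 / sqrt 3) = 1/3"
    by (simp flip: of_real_mult)
  have sq: "psi_L u v a b l * cnj (psi_L u v a b l)
      = complex_of_real (a\<^sup>2) * ket 0 l + complex_of_real (b\<^sup>2 / 3) * (ket u l + ket v l + ket (u XOR v) l)" for l
    unfolding psi_L_def D_L_def ket_def using u0 v0 uv xor_uv_distinct r3
    by (auto simp: power2_eq_square algebra_simps)
  have ket_sum: "(\<Sum>l<2^n. ket c l) = 1" if "c < 2^n" for c
    using sum_mult_ket[OF that, of "\<lambda>_. 1"] by simp
  show ?thesis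
    unfolding sq sum.distrib sum_distrib_left[symmetric]
    using ket_sum[of 0] ket_sum[OF u] ket_sum[OF v] ket_sum[OF xor_uv_less] by simp
qed

lemma rho_L_trace:
  assumes "0 \<le> g" "g \<le> 1" and "a\<^sup>2 + b\<^sup>2 = 1"
  shows "(\<Sum>x<2^n. rho_L n u v a b g x x) = 1"
  unfolding rho_L_def ad_channel_trace[OF assms(1,2)] psi_L_norm assms(3) by simp

lemma plane_not_inner: "p \<in> {u, v, u XOR v} \<Longrightarrow> p \<notin> inner_weights"
  using plane_hw weight_pos by auto

lemma rho_L_entries:
  assumes g: "0 \<le> g" "g \<le> 1"
  shows rho_L_plane_entry: "\<And>p q. p \<in> {u, v, u XOR v} \<Longrightarrow> q \<in> {u, v, u XOR v} \<Longrightarrow>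
      rho_L n u v a b g p q = complex_of_real (b\<^sup>2 * (1 - g) ^ k / 3)"
    and rho_L_00_entry: "rho_L n u v a b g 0 0 = complex_of_real (a\<^sup>2 + b\<^sup>2 * g ^ k)"
    and rho_L_0u_entry: "rho_L n u v a b g 0 u = complex_of_real (a * b * sqrt (1 - g) ^ k / sqrt 3)"
proof -
  obtain \<Omega> where E: "mat_eq (2^n) (rho_L n u v a b g)
     (\<lambda>x y. complex_of_real (a\<^sup>2 + b\<^sup>2 * g ^ k) * proj (ket 0) x y
          + complex_of_real (b\<^sup>2 * (1 - g) ^ k) * proj (D_L u v) x y
          + complex_of_real (a * b * sqrt (1 - g) ^ k) * (ket 0 x * cnj (D_L u v y) + D_L u v x * cnj (ket 0 y))
          + \<Omega> x y)"
    and C: "stab_cone_on n inner_weights \<Omega>"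
    using rho_L_decomposition[OF g] by blast
  have r3: "complex_of_real (1 / sqrt 3) * complex_of_real (1 / sqrt 3) = 1/3" by (simp flip: of_real_mult)
  have 0: "(0::nat) < 2^n" "0 \<notin> inner_weights" by (simp_all add: hw_def)
  show "rho_L n u v a b g p q = complex_of_real (b\<^sup>2 * (1 - g) ^ k / 3)"
    if p: "p \<in> {u, v, u XOR v}" and q: "q \<in> {u, v, u XOR v}" for p q
  proof -
    have "\<Omega> p q = 0" using stab_cone_on_vanishes[OF C plane_less[OF p] plane_less[OF q]] plane_not_inner[OF p] by blast
    then show ?thesis
      using E plane_less[OF p] plane_less[OF q] plane_nonzero[OF p] plane_nonzero[OF q] D_L_plane[OF p] D_L_plane[OF q] r3
      by (simp add: mat_eq_def proj_def ket_def)
  qed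
  show "rho_L n u v a b g 0 0 = complex_of_real (a\<^sup>2 + b\<^sup>2 * g ^ k)"
    using E stab_cone_on_vanishes[OF C 0(1) 0(1)] 0 by (simp add: mat_eq_def proj_def ket_def D_L_0)
  show "rho_L n u v a b g 0 u = complex_of_real (a * b * sqrt (1 - g) ^ k / sqrt 3)"
    using E stab_cone_on_vanishes[OF C 0(1) u] 0 u u0 D_L_plane[of u] D_L_0
    by (simp add: mat_eq_def proj_def ket_def)
qed

lemma rho_L_in_stab_polytope_imp:
  assumes g: "0 \<le> g" "g \<le> 1" and ab: "0 \<le> a * b" and P: "rho_L n u v a b g \<in> stab_polytope n"
  shows "b\<^sup>2 * (1 - g) ^ k / 3 \<le> a\<^sup>2 + b\<^sup>2 * g ^ k"
    and "a * b * sqrt (1 - g) ^ k \<le> b\<^sup>2 * (1 - g) ^ k / sqrt 3"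
proof -
  let ?pL = "b\<^sup>2 * (1 - g) ^ k"
  note bound = stab_polytope_bound[OF P u v rho_L_plane_entry[OF g]]
  show "?pL / 3 \<le> a\<^sup>2 + b\<^sup>2 * g ^ k"
    using bound(1) rho_L_00_entry[OF g] by simp
  have "cmod (rho_L n u v a b g 0 u) = a * b * sqrt (1 - g) ^ k / sqrt 3"
    unfolding rho_L_0u_entry[OF g] norm_of_real using ab g by simp
  then have "a * b * sqrt (1 - g) ^ k \<le> ?pL / 3 * sqrt 3"
    using bound(2) by (simp add: divide_le_eq mult.commute)
  also have "?pL / 3 * sqrt 3 = ?pL / sqrt 3"
    by (simp add: field_simps flip: real_sqrt_mult_self[of 3])
  finally show "a * b * sqrt (1 - g) ^ k \<le> ?pL / sqrt 3" .
qed

definition plane_state :: "complex \<Rightarrow> nat \<Rightarrow> complex" where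
  "plane_state s x = (s * ket 0 x + (ket u x + ket v x + ket (u XOR v) x)) / 2"

lemma stab_state_plane_state:
  assumes "s = 1 \<or> s = -1"
  shows "stab_state n (plane_state s)"
proof -
  obtain j where j: "j < n" "bit u j" "\<not> bit v j" using exists_bit_diff[OF u v _ uv] hw_u hw_v by auto
  obtain l where l: "l < n" "bit v l" "\<not> bit u l" using exists_bit_diff[OF v u _ uv[symmetric]] hw_u hw_v by auto
  have "plane_state s = (\<lambda>x. if x = 0 then s / 2 else if x = u \<or> x = v \<or> x = u XOR v then 1/2 else 0)"
    using u0 v0 uv xor_uv_distinct by (auto simp: plane_state_def ket_def fun_eq_iff)
  moreover have "(\<lambda>x. if x = 0 then 1 / 2 else if x = u \<or> x = v \<or> x = u XOR v then 1/2 else 0)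
      = (\<lambda>x. if x = 0 \<or> x = u \<or> x = v \<or> x = u XOR v then 1/2 else (0::complex))"
    by (auto simp: fun_eq_iff)
  ultimately show ?thesis
    using stab_state_plane[OF u v j(1) l(1) j(2) j(3) l(2) l(3)] assms by auto
qed

lemma plane_block_eq_mixture:
  fixes p0 pL cL :: real
  shows "complex_of_real (2 * pL / 3 + 2 * cL / sqrt 3) * proj (plane_state 1) x y
      + complex_of_real (2 * pL / 3 - 2 * cL / sqrt 3) * proj (plane_state (-1)) x y
      + complex_of_real (p0 - pL / 3) * proj (ket 0) x y
    = complex_of_real p0 * proj (ket 0) x y + complex_of_real pL * proj (D_L u v) x y
      + complex_of_real cL * (ket 0 x * cnj (D_L u v y) + D_L u v x * cnj (ket 0 y))"
proof -
  have identity: "(2*A/3 + 2*C*r) * (((1*X + S) / 2) * ((1*Y + T) / 2))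
       + (2*A/3 - 2*C*r) * (((-1*X + S) / 2) * ((-1*Y + T) / 2)) + (P - A/3) * (X * Y)
     = P * (X * Y) + A * ((r * S) * (r * T)) + C * (X * (r * T) + (r * S) * Y)"
    if "r * r = 1/3" for A C P X Y S T r :: complex
  proof -
    have "(2*A/3 + 2*C*r) * (((1*X + S) / 2) * ((1*Y + T) / 2))
       + (2*A/3 - 2*C*r) * (((-1*X + S) / 2) * ((-1*Y + T) / 2)) + (P - A/3) * (X * Y)
     = P * (X * Y) + A * ((r * S) * (r * T)) + C * (X * (r * T) + (r * S) * Y) + A * (S * T) * (1/3 - r * r)"
      by (simp add: field_simps)
    from this[unfolded that] show ?thesis by simp
  qed
  have r3: "complex_of_real (1 / sqrt 3) * complex_of_real (1 / sqrt 3) = 1/3"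
    by (simp flip: of_real_mult)
  show ?thesis
    using identity[where A = "complex_of_real pL" and C = "complex_of_real cL" and P = "complex_of_real p0"
        and X = "ket 0 x" and Y = "ket 0 y" and S = "ket u x + ket v x + ket (u XOR v) x"
        and T = "ket u y + ket v y + ket (u XOR v) y", OF r3]
    by (simp add: proj_def plane_state_def D_L_def)
qed

lemma rho_L_in_stab_polytope_if:
  assumes g: "0 \<le> g" "g \<le> 1" and ab: "0 \<le> a * b" "a\<^sup>2 + b\<^sup>2 = 1"
    and H: "b\<^sup>2 * (1 - g) ^ k / 3 \<le> a\<^sup>2 + b\<^sup>2 * g ^ k" "a * b * sqrt (1 - g) ^ k \<le> b\<^sup>2 * (1 - g) ^ k / sqrt 3"
  shows "rho_L n u v a b g \<in> stab_polytope n"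
proof -
  define p0 where "p0 = a\<^sup>2 + b\<^sup>2 * g ^ k"
  define pL where "pL = b\<^sup>2 * (1 - g) ^ k"
  define cL where "cL = a * b * sqrt (1 - g) ^ k"
  obtain \<Omega> where E: "mat_eq (2^n) (rho_L n u v a b g)
     (\<lambda>x y. complex_of_real p0 * proj (ket 0) x y + complex_of_real pL * proj (D_L u v) x y
          + complex_of_real cL * (ket 0 x * cnj (D_L u v y) + D_L u v x * cnj (ket 0 y)) + \<Omega> x y)"
    and C: "stab_cone_on n inner_weights \<Omega>"
    using rho_L_decomposition[OF g, of a b] unfolding p0_def pL_def cL_def by blast
  let ?M = "\<lambda>x y. \<Omega> x y + complex_of_real (2 * pL / 3 + 2 * cL / sqrt 3) * proj (plane_state 1) x y
      + complex_of_real (2 * pL / 3 - 2 * cL / sqrt 3) * proj (plane_state (-1)) x y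
      + complex_of_real (p0 - pL / 3) * proj (ket 0) x y"
  have "0 \<le> 2 * pL / 3 - 2 * cL / sqrt 3"
  proof -
    have "cL / sqrt 3 \<le> pL / sqrt 3 / sqrt 3"
      using H(2) unfolding cL_def pL_def by (intro divide_right_mono) auto
    also have "\<dots> = pL / 3" by (simp flip: real_sqrt_mult_self[of 3])
    finally show ?thesis by simp
  qed
  moreover have "0 \<le> 2 * pL / 3 + 2 * cL / sqrt 3" "0 \<le> p0 - pL / 3"
    using ab g H(1) by (simp_all add: pL_def cL_def p0_def)
  ultimately have "stab_cone_on n UNIV ?M"
    using stab_state_plane_state[of 1] stab_state_plane_state[of "-1"] stab_state_ket[of 0 n]
    by (intro stab_cone_on_add disjI2 stab_termI stab_cone_on_mono[OF C]) auto
  moreover have "mat_eq (2^n) (rho_L n u v a b g) ?M"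
    using E[unfolded plane_block_eq_mixture[symmetric]] by (simp add: mat_eq_def algebra_simps)
  ultimately show ?thesis
    using stab_polytope_if_cone_trace_1 stab_cone_on_mat_eq rho_L_trace[OF g ab(2)] by blast
qed

lemma rho_L_in_stab_polytope_iff:
  assumes "0 \<le> g" "g \<le> 1" "0 \<le> a * b" "a\<^sup>2 + b\<^sup>2 = 1"
  shows "rho_L n u v a b g \<in> stab_polytope n \<longleftrightarrow>
    b\<^sup>2 * (1 - g) ^ k / 3 \<le> a\<^sup>2 + b\<^sup>2 * g ^ k \<and> a * b * sqrt (1 - g) ^ k \<le> b\<^sup>2 * (1 - g) ^ k / sqrt 3"
proof
  assume "rho_L n u v a b g \<in> stab_polytope n"
  then show "b\<^sup>2 * (1 - g) ^ k / 3 \<le> a\<^sup>2 + b\<^sup>2 * g ^ k \<and> a * b * sqrt (1 - g) ^ k \<le> b\<^sup>2 * (1 - g) ^ k / sqrt 3"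
    using rho_L_in_stab_polytope_imp[OF assms(1-3)] by blast
qed (use rho_L_in_stab_polytope_if[OF assms] in blast)

end

section \<open>The damping thresholds\<close>

lemma ratio_conditions_iff:
  fixes a b r x y s t :: real
  assumes b: "b > 0" and r: "r = a / b"
  shows "b\<^sup>2 * y / 3 \<le> a\<^sup>2 + b\<^sup>2 * x \<longleftrightarrow> y / 3 \<le> r\<^sup>2 + x"
    and "a * b * s \<le> b\<^sup>2 * t / sqrt 3 \<longleftrightarrow> r * s \<le> t / sqrt 3"
proof -
  have a: "a = r * b" using r b by simp
  have "a\<^sup>2 + b\<^sup>2 * x = b\<^sup>2 * (r\<^sup>2 + x)" "b\<^sup>2 * y / 3 = b\<^sup>2 * (y / 3)"
    by (simp_all add: a power2_eq_square algebra_simps)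
  then show "b\<^sup>2 * y / 3 \<le> a\<^sup>2 + b\<^sup>2 * x \<longleftrightarrow> y / 3 \<le> r\<^sup>2 + x"
    using b by simp
  have "a * b * s = b\<^sup>2 * (r * s)" "b\<^sup>2 * t / sqrt 3 = b\<^sup>2 * (t / sqrt 3)"
    by (simp_all add: a power2_eq_square mult_ac)
  then show "a * b * s \<le> b\<^sup>2 * t / sqrt 3 \<longleftrightarrow> r * s \<le> t / sqrt 3"
    using b by (simp only: mult_le_cancel_left_pos zero_less_power)
qed

lemma population_gap_strict_mono:
  fixes x y :: real
  assumes "1 \<le> k" "0 \<le> x" "x < y" "y \<le> 1"
  shows "x ^ k - (1 - x) ^ k / 3 < y ^ k - (1 - y) ^ k / 3"
proof -
  have "x ^ k < y ^ k" using assms by (intro power_strict_mono) auto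
  moreover have "(1 - y) ^ k \<le> (1 - x) ^ k" using assms by (intro power_mono) auto
  ultimately show ?thesis by simp
qed

lemma population_condition_iff:
  fixes r g \<gamma> :: real
  assumes k: "1 \<le> k" and g: "0 \<le> g" "g \<le> 1" "r\<^sup>2 + g ^ k = (1 - g) ^ k / 3" and \<gamma>: "0 \<le> \<gamma>" "\<gamma> \<le> 1"
  shows "(1 - \<gamma>) ^ k / 3 \<le> r\<^sup>2 + \<gamma> ^ k \<longleftrightarrow> g \<le> \<gamma>"
  using population_gap_strict_mono[OF k, of \<gamma> g] population_gap_strict_mono[OF k, of g \<gamma>] assms
  by (cases "\<gamma> < g"; cases "g < \<gamma>") auto

lemma coherence_condition_iff:
  fixes r \<gamma> :: real
  assumes k: "1 \<le> k" and r: "0 < r" and \<gamma>: "0 \<le> \<gamma>" "\<gamma> < 1"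
  shows "r * sqrt (1 - \<gamma>) ^ k \<le> (1 - \<gamma>) ^ k / sqrt 3 \<longleftrightarrow> \<gamma> \<le> 1 - (sqrt 3 * r) powr (2 / real k)"
proof -
  define c where "c = sqrt 3 * r"
  define s where "s = sqrt (1 - \<gamma>) ^ k"
  have c0: "0 < c" and s0: "0 < s" and kpos: "0 < real k" using r \<gamma> k by (simp_all add: c_def s_def)
  have "(1 - \<gamma>) ^ k = s * s" unfolding s_def using \<gamma> by (simp flip: power_mult_distrib)
  then have "r * s \<le> (1 - \<gamma>) ^ k / sqrt 3 \<longleftrightarrow> c \<le> s"
    using s0 by (simp add: c_def field_simps)
  also have "\<dots> \<longleftrightarrow> c powr (2 / real k) \<le> s powr (2 / real k)"
  proof
    show "c \<le> s \<Longrightarrow> c powr (2 / real k) \<le> s powr (2 / real k)"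
      using c0 kpos by (intro powr_mono2) auto
    show "c powr (2 / real k) \<le> s powr (2 / real k) \<Longrightarrow> c \<le> s"
      using s0 kpos powr_less_mono2[of "2 / real k" s c] by fastforce
  qed
  also have "s powr (2 / real k) = 1 - \<gamma>"
    unfolding s_def using \<gamma> kpos
    by (simp add: powr_half_sqrt[symmetric] powr_realpow[symmetric] powr_powr)
  finally show ?thesis unfolding s_def c_def by linarith
qed

lemma coherence_threshold:
  fixes r :: real
  assumes k: "1 \<le> k" and r: "0 < r" "r < 1 / sqrt 3"
  defines "\<gamma>p \<equiv> 1 - (sqrt 3 * r) powr (2 / real k)"
  shows "0 < \<gamma>p" "\<gamma>p < 1" "(1 - \<gamma>p) ^ k = 3 * r\<^sup>2"
proof -
  define c where "c = sqrt 3 * r"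
  have c: "0 < c" "c < 1" using r by (simp_all add: c_def field_simps)
  have kpos: "0 < real k" using k by simp
  have \<gamma>p_c: "\<gamma>p = 1 - c powr (2 / real k)" unfolding \<gamma>p_def c_def ..
  have "0 < c powr (2 / real k)" "c powr (2 / real k) < 1"
    using c kpos powr_less_mono2[of "2 / real k" c 1] by simp_all
  then show "0 < \<gamma>p" "\<gamma>p < 1" unfolding \<gamma>p_c by simp_all
  have "(c powr (2 / real k)) ^ k = c powr (2 / real k * real k)"
    using c by (simp add: powr_powr powr_realpow[symmetric] mult.commute)
  also have "\<dots> = c\<^sup>2" using c kpos by (simp add: powr_realpow)
  finally show "(1 - \<gamma>p) ^ k = 3 * r\<^sup>2"
    unfolding \<gamma>p_c by (simp add: c_def power_mult_distrib)
qed

lemma population_threshold_unique: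
  fixes r :: real
  assumes k: "1 \<le> k" and r: "0 < r" "r < 1 / sqrt 3"
  defines "\<gamma>p \<equiv> 1 - (sqrt 3 * r) powr (2 / real k)"
  shows "\<exists>!g. 0 < g \<and> g < \<gamma>p \<and> r\<^sup>2 + g ^ k = (1 - g) ^ k / 3"
proof -
  define f where "f x = r\<^sup>2 + x ^ k - (1 - x) ^ k / 3" for x :: real
  note \<gamma>p = coherence_threshold[OF k r, folded \<gamma>p_def]
  have "f \<gamma>p = \<gamma>p ^ k" using \<gamma>p(3) by (simp add: f_def)
  then have f\<gamma>p: "f \<gamma>p > 0" using \<gamma>p(1) by simp
  have "r\<^sup>2 < (1 / sqrt 3)\<^sup>2" using r by (intro power_strict_mono) auto
  then have f0: "f 0 < 0" using k by (simp add: f_def power_divide zero_power)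
  have cont: "\<forall>x. 0 \<le> x \<and> x \<le> \<gamma>p \<longrightarrow> isCont f x"
    unfolding f_def by (auto intro!: continuous_intros)
  obtain g where g: "0 \<le> g" "g \<le> \<gamma>p" "f g = 0"
    using IVT[of f 0 0 \<gamma>p] f0 f\<gamma>p \<gamma>p(1) cont by force
  have g_pos: "0 < g" and g_less: "g < \<gamma>p" using g f0 f\<gamma>p by (auto simp: le_less)
  have unique: "h = g" if h: "0 < h" "h < \<gamma>p" "f h = 0" for h
  proof (rule ccontr)
    assume "h \<noteq> g"
    then consider "h < g" | "g < h" by linarith
    then show False
    proof cases
      case 1
      then have "h ^ k - (1 - h) ^ k / 3 < g ^ k - (1 - g) ^ k / 3"
        using h g \<gamma>p(2) by (intro population_gap_strict_mono[OF k]) auto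
      then show False using h(3) g(3) by (simp add: f_def)
    next
      case 2
      then have "g ^ k - (1 - g) ^ k / 3 < h ^ k - (1 - h) ^ k / 3"
        using h g \<gamma>p(2) by (intro population_gap_strict_mono[OF k]) auto
      then show False using h(3) g(3) by (simp add: f_def)
    qed
  qed
  show ?thesis
  proof (rule ex1I[of _ g])
    show "0 < g \<and> g < \<gamma>p \<and> r\<^sup>2 + g ^ k = (1 - g) ^ k / 3"
      using g_pos g_less g(3) by (simp add: f_def)
    show "h = g" if "0 < h \<and> h < \<gamma>p \<and> r\<^sup>2 + h ^ k = (1 - h) ^ k / 3" for h
      using that by (intro unique) (simp_all add: f_def)
  qed
qed

lemma stab_conditions_iff_damping_interval:
  fixes r g \<gamma> :: real
  assumes k: "1 \<le> k" and r: "0 < r" "r < 1 / sqrt 3"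
    and g: "0 < g" "g < 1 - (sqrt 3 * r) powr (2 / real k)" "r\<^sup>2 + g ^ k = (1 - g) ^ k / 3"
    and \<gamma>: "0 \<le> \<gamma>" "\<gamma> \<le> 1"
  shows "(1 - \<gamma>) ^ k / 3 \<le> r\<^sup>2 + \<gamma> ^ k \<and> r * sqrt (1 - \<gamma>) ^ k \<le> (1 - \<gamma>) ^ k / sqrt 3
    \<longleftrightarrow> (g \<le> \<gamma> \<and> \<gamma> \<le> 1 - (sqrt 3 * r) powr (2 / real k)) \<or> \<gamma> = 1"
proof (cases "\<gamma> = 1")
  case True
  then show ?thesis using k by (simp add: zero_power)
next
  case False
  have "g \<le> 1" using g coherence_threshold(2)[OF k r] by linarith
  then show ?thesis
    using False \<gamma> population_condition_iff[OF k _ _ g(3) \<gamma>] coherence_condition_iff[OF k r(1), of \<gamma>] g(1)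
    by auto
qed

lemma damping_thresholds_weight_2:
  fixes r g :: real
  assumes r: "0 < r" and g: "0 < g" "r\<^sup>2 + g\<^sup>2 = (1 - g)\<^sup>2 / 3"
  shows "g = (sqrt (3 - 6 * r\<^sup>2) - 1) / 2" and "1 - (sqrt 3 * r) powr (2 / real 2) = 1 - sqrt 3 * r"
proof -
  have "(2 * g + 1)\<^sup>2 = 3 - 6 * r\<^sup>2" using g(2) by (simp add: power2_eq_square algebra_simps)
  moreover have "sqrt ((2 * g + 1)\<^sup>2) = 2 * g + 1" using g(1) by simp
  ultimately have "sqrt (3 - 6 * r\<^sup>2) = 2 * g + 1" by simp
  then show "g = (sqrt (3 - 6 * r\<^sup>2) - 1) / 2" by simp
  show "1 - (sqrt 3 * r) powr (2 / real 2) = 1 - sqrt 3 * r" using r by simp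
qed

theorem propositionS4:
  fixes n k u v :: nat and \<alpha> \<beta> r :: real
  assumes "u < 2^n" and "v < 2^n" and "u \<noteq> 0" and "v \<noteq> 0" and "u \<noteq> v"
    and "hw n u = k" and "hw n v = k" and "hw n (xor u v) = k"
    and "\<alpha> > 0" and "\<beta> > 0" and "\<alpha>\<^sup>2 + \<beta>\<^sup>2 = 1" and "r = \<alpha> / \<beta>"
  shows
    "(\<forall>\<gamma>\<in>{0..1}.
        let q = 1 - \<gamma>; p0 = \<alpha>\<^sup>2 + \<beta>\<^sup>2 * \<gamma> ^ k; pL = \<beta>\<^sup>2 * q ^ k; cL = \<alpha> * \<beta> * sqrt q ^ k in
        (\<exists>\<Omega>. mat_eq (2^n) (rho_L n u v \<alpha> \<beta> \<gamma>)
                (\<lambda>x y. complex_of_real p0 * proj (ket 0) x y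
                       + complex_of_real pL * proj (D_L u v) x y
                       + complex_of_real cL * (ket 0 x * cnj (D_L u v y) + D_L u v x * cnj (ket 0 y))
                       + \<Omega> x y)
             \<and> stab_cone_on n {x. 1 \<le> hw n x \<and> hw n x \<le> k - 1} \<Omega>)
        \<and> (rho_L n u v \<alpha> \<beta> \<gamma> \<in> stab_polytope n \<longleftrightarrow> p0 \<ge> pL / 3 \<and> cL \<le> pL / sqrt 3))
     \<and> (0 < r \<and> r < 1 / sqrt 3 \<longrightarrow>
        (let \<gamma>p = 1 - (sqrt 3 * r) powr (2 / real k) in
          (\<exists>!g. 0 < g \<and> g < \<gamma>p \<and> r\<^sup>2 + g ^ k = (1 - g) ^ k / 3) \<and>
          (\<forall>g. 0 < g \<and> g < \<gamma>p \<and> r\<^sup>2 + g ^ k = (1 - g) ^ k / 3 \<longrightarrow>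
             (\<forall>\<gamma>\<in>{0..1}. rho_L n u v \<alpha> \<beta> \<gamma> \<in> stab_polytope n \<longleftrightarrow> (g \<le> \<gamma> \<and> \<gamma> \<le> \<gamma>p) \<or> \<gamma> = 1) \<and>
             (n = 3 \<and> k = 2 \<longrightarrow> g = (sqrt (3 - 6 * r\<^sup>2) - 1) / 2 \<and> \<gamma>p = 1 - sqrt 3 * r))))"
proof -
  interpret equal_weight_plane n k u v
    using assms(1-8) by unfold_locales
  have ab: "0 \<le> \<alpha> * \<beta>" using assms(9,10) by simp
  have polytope_iff: "rho_L n u v \<alpha> \<beta> \<gamma> \<in> stab_polytope n \<longleftrightarrow>
      (1 - \<gamma>) ^ k / 3 \<le> r\<^sup>2 + \<gamma> ^ k \<and> r * sqrt (1 - \<gamma>) ^ k \<le> (1 - \<gamma>) ^ k / sqrt 3"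
    if "\<gamma> \<in> {0..1}" for \<gamma>
    using that rho_L_in_stab_polytope_iff[OF _ _ ab assms(11)] ratio_conditions_iff[OF assms(10,12)] by auto
  show ?thesis
    unfolding Let_def
    apply (intro conjI ballI impI allI)
    subgoal by (rule rho_L_decomposition) auto
    subgoal by (rule rho_L_in_stab_polytope_iff) (use ab assms(11) in auto)
    subgoal using population_threshold_unique[OF weight_pos] by blast
    subgoal for g \<gamma>
      using polytope_iff[of \<gamma>] stab_conditions_iff_damping_interval[OF weight_pos, of r g \<gamma>] by auto
    subgoal for g using damping_thresholds_weight_2(1)[of r g] by auto
    subgoal for g using damping_thresholds_weight_2(2)[of r] by auto
    done
qed

end
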